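(* Let $p\in(2,6)$ and $\mu>0$. Let $V:\mathbf{R}\to\mathbf{R}$ be continuous, non-negative, not identically zero, with $V(x)\to0$ as $|x|\to\infty$. Then $$\inf_{u\in H^1(\mathbf{R}),\ \|u\|^2_{L^2}=\mu}E_V(u)=E_0(\phi_\mu),$$ and the infimum is not attained. The same holds with $E_V$ replaced by $E_g$ for any $g>0$.
   Context: $E_0(u)=\frac12\|u'\|^2_{L^2(\mathbf{R})}-\frac1p\|u\|^p_{L^p(\mathbf{R})}$, $E_V(u)=E_0(u)+\frac12\int_{\mathbf{R}}V|u|^2\,dx$, $E_g(u)=E_0(u)+\frac g2|u(0)|^2$ for $u\in H^1(\mathbf{R})$. $\phi_\mu(x)=C_p\mu^{\frac{2}{6-p}}\operatorname{sech}^{\frac{2}{p-2}}(c_p\mu^{\frac{p-2}{6-p}}x)$ (constants depending only on $p$) is the unique positive even minimizer of $E_0$ at mass $\|u\|^2_{L^2}=\mu$. *)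

theory Defs
  imports "HOL-Analysis.Analysis"
begin

definition weak_deriv_L2 :: "(real \<Rightarrow> complex) \<Rightarrow> (real \<Rightarrow> complex) \<Rightarrow> bool" where
  "weak_deriv_L2 u w \<longleftrightarrow>
     w \<in> borel_measurable lborel \<and>
     integrable lborel (\<lambda>x. (cmod (w x))\<^sup>2) \<and>
     (\<forall>a b. a \<le> b \<longrightarrow> set_integrable lborel {a..b} w \<and>
                      u b - u a = (LINT x:{a..b}|lborel. w x))"

text \<open>In one dimension every H^1 class has a unique continuous representative;
  we identify H^1(R) with these representatives.\<close>
definition H1 :: "(real \<Rightarrow> complex) \<Rightarrow> bool" where
  "H1 u \<longleftrightarrow> continuous_on UNIV u \<and>
            integrable lborel (\<lambda>x. (cmod (u x))\<^sup>2) \<and>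
            (\<exists>w. weak_deriv_L2 u w)"

definition dH1 :: "(real \<Rightarrow> complex) \<Rightarrow> real \<Rightarrow> complex" where
  "dH1 u = (SOME w. weak_deriv_L2 u w)"

definition mass :: "(real \<Rightarrow> complex) \<Rightarrow> real" where
  "mass u = (LINT x|lborel. (cmod (u x))\<^sup>2)"

definition E0 :: "real \<Rightarrow> (real \<Rightarrow> complex) \<Rightarrow> real" where
  "E0 p u = (1/2) * (LINT x|lborel. (cmod (dH1 u x))\<^sup>2)
             - (1/p) * (LINT x|lborel. (cmod (u x)) powr p)"

definition EV :: "real \<Rightarrow> (real \<Rightarrow> real) \<Rightarrow> (real \<Rightarrow> complex) \<Rightarrow> real" where
  "EV p V u = E0 p u + (1/2) * (LINT x|lborel. V x * (cmod (u x))\<^sup>2)"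

definition Eg :: "real \<Rightarrow> real \<Rightarrow> (real \<Rightarrow> complex) \<Rightarrow> real" where
  "Eg p g u = E0 p u + (g/2) * (cmod (u 0))\<^sup>2"

definition sech :: "real \<Rightarrow> real" where
  "sech x = 1 / cosh x"

text \<open>Q solves Q'' - Q + Q^(p-1) = 0; M1 is its mass.\<close>
definition Qp :: "real \<Rightarrow> real \<Rightarrow> real" where
  "Qp p x = (p/2) powr (1/(p-2)) * (sech ((p-2)/2 * x)) powr (2/(p-2))"

definition M1 :: "real \<Rightarrow> real" where
  "M1 p = (LINT x|lborel. (Qp p x)\<^sup>2)"

text \<open>frequency omega with mass of omega^(1/(p-2)) Q(sqrt omega x) equal to mu\<close>
definition omega :: "real \<Rightarrow> real \<Rightarrow> real" where
  "omega p \<mu> = (\<mu> / M1 p) powr (2*(p-2)/(6-p))"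

text \<open>phi_mu(x) = C_p mu^(2/(6-p)) sech^(2/(p-2))(c_p mu^((p-2)/(6-p)) x)\<close>
definition phi :: "real \<Rightarrow> real \<Rightarrow> real \<Rightarrow> real" where
  "phi p \<mu> x = (omega p \<mu>) powr (1/(p-2)) * Qp p (sqrt (omega p \<mu>) * x)"

end

theory Submission
  imports Defs "HOL-Real_Asymp.Real_Asymp"
begin

(* Calibration argument. For u in H^1 with M = sup |u| put h_M(s) = sqrt((2/p)(M^(p-2) s^2 - s^p)).
   Completing the square,
     E0 u = 1/2 int (|u'| - h_M(|u|))^2 + int h_M(|u|) |u'| - M^(p-2) (mass u) / p,
   and since |u| rises from (almost) 0 to M and falls back, int h_M(|u|) |u'| >= 2 int_0^M h_M.
   After scaling, the resulting lower bound depends only on M / A, where A = max phi_mu, and is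
   smallest at M = A; there phi_mu attains it because |phi_mu'| = h_A(phi_mu). So phi_mu minimises E0
   on the mass sphere, and a function of equal energy satisfies |u'| = h_M(|u|) <= L |u| a.e.,
   hence has no zero. A nonnegative perturbation vanishing only where u has a zero (V |u|^2 with
   V > 0 somewhere, or g |u(0)|^2) can therefore never be balanced, while translates of phi_mu
   escaping to infinity make it arbitrarily small. *)

lemma integrable_inverse_cosh:
  fixes k :: real assumes "0 < k"
  shows "integrable lborel (\<lambda>x. cosh (k*x) powr (-1))"
proof -
  have primitive: "((\<lambda>x. 2/k * arctan (exp (k*x))) has_real_derivative cosh (k*x) powr (-1)) (at x)"
    for x
  proof -
    have "((\<lambda>x. 2/k * arctan (exp (k*x))) has_real_derivative
            2/k * (inverse (1 + (exp (k*x))\<^sup>2) * (exp (k*x) * k))) (at x)"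
      by (auto intro!: derivative_eq_intros)
    moreover have "2/k * (inverse (1 + (exp (k*x))\<^sup>2) * (exp (k*x) * k)) = cosh (k*x) powr (-1)"
    proof -
      have "cosh (k*x) = (exp (k*x) + inverse (exp (k*x)))/2"
        by (simp add: cosh_def exp_minus)
      moreover have "1 + exp (k*x) * exp (k*x) > 0" by (simp add: add_pos_nonneg)
      ultimately show ?thesis
        using assms by (simp add: powr_minus field_simps power2_eq_square)
    qed
    ultimately show ?thesis by simp
  qed
  have "((\<lambda>x. exp (k*x)) \<longlongrightarrow> 0) at_bot"
    using assms by (auto intro!: filterlim_compose[OF exp_at_bot]
        filterlim_tendsto_pos_mult_at_bot filterlim_ident)
  then have lim_bot: "((\<lambda>x. 2/k * arctan (exp (k*x))) \<longlongrightarrow> 2/k * arctan 0) at_bot"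
    by (intro tendsto_intros)
  have "filterlim (\<lambda>x. exp (k*x)) at_top at_top"
    using assms by (auto intro!: filterlim_compose[OF exp_at_top]
        filterlim_tendsto_pos_mult_at_top filterlim_ident)
  then have "((\<lambda>x. arctan (exp (k*x))) \<longlongrightarrow> pi/2) at_top"
    by (rule filterlim_compose[OF tendsto_arctan_at_top])
  then have lim_top: "((\<lambda>x. 2/k * arctan (exp (k*x))) \<longlongrightarrow> 2/k * (pi/2)) at_top"
    by (intro tendsto_intros)
  have "set_integrable lborel (einterval (-\<infinity>) \<infinity>) (\<lambda>x. cosh (k*x) powr (-1))"
    by (rule interval_integral_FTC_nonneg(1)[OF _ primitive _ _ _ _])
       (use lim_bot lim_top in \<open>auto simp: ereal_tendsto_simps intro!: continuous_intros\<close>)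
  then show ?thesis by (simp add: set_integrable_def)
qed

lemma integrable_cosh_powr_neg:
  fixes k e :: real assumes "0 < k" "1 \<le> e"
  shows "integrable lborel (\<lambda>x. cosh (k*x) powr (-e))"
proof (rule Bochner_Integration.integrable_bound[OF integrable_inverse_cosh[OF assms(1)]])
  show "(\<lambda>x. cosh (k*x) powr (-e)) \<in> borel_measurable lborel"
    unfolding measurable_lborel2 by (intro borel_measurable_continuous_onI continuous_intros) auto
  have "cosh (k*x) powr (-e) \<le> cosh (k*x) powr (-1)" for x
    using assms by (intro powr_mono) (auto simp: cosh_real_ge_1)
  then show "AE x in lborel. norm (cosh (k*x) powr (-e)) \<le> norm (cosh (k*x) powr (-1))"
    by simp
qed

lemma cosh_powr_sinh_has_derivative:
  fixes k e :: real
  shows "((\<lambda>x. cosh (k*x) powr (-(e+1)) * sinh (k*x)) has_real_derivative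
           k * ((e+1) * cosh (k*x) powr (-(e+2)) - e * cosh (k*x) powr (-e))) (at x)"
proof -
  let ?c = "cosh (k*x)"
  let ?D = "(-(e+1)) * ?c powr (-(e+1) - 1) * (sinh (k*x) * k) * sinh (k*x) + ?c powr (-(e+1)) * (?c * k)"
  have "((\<lambda>x. cosh (k*x) powr (-(e+1)) * sinh (k*x)) has_real_derivative ?D) (at x)"
    by (rule derivative_eq_intros refl | simp)+
  have sinh_term: "?c powr (-(e+1) - 1) * (sinh (k*x))\<^sup>2 = ?c powr (-e) - ?c powr (-(e+2))"
  proof -
    have sq: "?c powr 2 = ?c\<^sup>2" by (simp add: powr_numeral)
    have exponent: "-(e+2) + 2 = -e" by simp
    have "?c powr (-(e+2)) * ?c powr 2 = ?c powr (-(e+2) + 2)" by (rule powr_add[symmetric])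
    then have "?c powr (-(e+2)) * ?c\<^sup>2 = ?c powr (-e)" unfolding sq exponent .
    moreover have "?c powr (-(e+1) - 1) = ?c powr (-(e+2))" by (simp add: algebra_simps)
    ultimately show ?thesis
      using cosh_square_eq[of "k*x"] by (simp add: algebra_simps)
  qed
  have cosh_term: "?c powr (-(e+1)) * ?c = ?c powr (-e)"
    by (simp add: powr_diff)
  have "?D = k * (-(e+1) * (?c powr (-(e+1) - 1) * (sinh (k*x))\<^sup>2) + ?c powr (-(e+1)) * ?c)"
    by (simp add: power2_eq_square algebra_simps)
  also have "\<dots> = k * (-(e+1) * (?c powr (-e) - ?c powr (-(e+2))) + ?c powr (-e))"
    by (simp only: sinh_term cosh_term)
  also have "\<dots> = k * ((e+1) * ?c powr (-(e+2)) - e * ?c powr (-e))"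
    by (simp add: algebra_simps)
  finally show ?thesis using \<open>(_ has_real_derivative ?D) (at x)\<close> by simp
qed

lemma cosh_powr_integral_recursion:
  fixes k e :: real assumes k: "0 < k" and e: "1 \<le> e"
  shows "(e + 1) * (LINT x|lborel. cosh (k*x) powr (-(e+2))) = e * (LINT x|lborel. cosh (k*x) powr (-e))"
proof -
  define F where "F x = cosh (k*x) powr (-(e+1)) * sinh (k*x)" for x
  define f where "f x = k * ((e+1) * cosh (k*x) powr (-(e+2)) - e * cosh (k*x) powr (-e))" for x
  have ie: "integrable lborel (\<lambda>x. cosh (k*x) powr (-e))"
    and ie2: "integrable lborel (\<lambda>x. cosh (k*x) powr (-(e+2)))"
    using integrable_cosh_powr_neg[OF k, of e] integrable_cosh_powr_neg[OF k, of "e+2"] e by auto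
  have "(LBINT x=-\<infinity>..\<infinity>. f x) = 0 - 0"
  proof (rule interval_integral_FTC_integrable)
    show "(F has_vector_derivative f x) (at x)" for x
      using cosh_powr_sinh_has_derivative[of k e x] unfolding F_def f_def
      by (simp add: has_real_derivative_iff_has_vector_derivative)
    show "isCont f x" for x unfolding f_def by (intro continuous_intros) auto
    show "set_integrable lborel (einterval (- \<infinity>) \<infinity>) f"
      using ie ie2 by (simp add: set_integrable_def f_def)
    show "((F \<circ> real_of_ereal) \<longlongrightarrow> 0) (at_right (- \<infinity>))"
      unfolding ereal_tendsto_simps F_def using k e by real_asymp
    show "((F \<circ> real_of_ereal) \<longlongrightarrow> 0) (at_left \<infinity>)"
      unfolding ereal_tendsto_simps F_def using k e by real_asymp
  qed simp
  then have "(LINT x|lborel. f x) = 0"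
    by (simp add: interval_lebesgue_integral_def set_lebesgue_integral_def)
  moreover have "(LINT x|lborel. f x) = k * ((e+1) * (LINT x|lborel. cosh (k*x) powr (-(e+2)))
      - e * (LINT x|lborel. cosh (k*x) powr (-e)))"
    unfolding f_def using ie ie2 by simp
  ultimately show ?thesis using k by simp
qed

lemma Bernoulli_inequality_powr:
  fixes t q :: real
  assumes t: "0 < t" and q: "1 \<le> q"
  shows "1 + q * (t - 1) \<le> t powr q"
proof -
  have "(t powr q) powr (1/q) * 1 powr (1 - 1/q) \<le> (1/q) * t powr q + (1 - 1/q) * 1"
    using q t by (intro Youngs_inequality_0) (auto simp: field_simps)
  moreover have "(t powr q) powr (1/q) = t" using q t by (simp add: powr_powr)
  ultimately have "q * t \<le> q * ((1/q) * t powr q + (1 - 1/q))" using q by simp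
  also have "\<dots> = t powr q + q - 1" using q by (simp add: field_simps)
  finally show ?thesis by (simp add: algebra_simps)
qed

lemma soliton_scaling_inequality:
  fixes p t :: real assumes p: "2 < p" "p < 6" and t: "0 < t"
  shows "p - 6 \<le> 2 * (p - 2) * t powr ((p + 2) / 2) - (p + 2) * t powr (p - 2)"
proof -
  define q where "q = (p + 2) / (2 * (p - 2))"
  have q: "1 \<le> q" using p by (simp add: q_def field_simps)
  have pq: "(p - 2) * q = (p + 2) / 2" using p by (simp add: q_def field_simps)
  have "(t powr (p - 2)) powr q = t powr ((p + 2) / 2)"
    unfolding powr_powr pq ..
  then have "1 + q * (t powr (p - 2) - 1) \<le> t powr ((p + 2) / 2)"
    using Bernoulli_inequality_powr[of "t powr (p - 2)" q] q t by simp
  then have "2 * (p - 2) * (1 + q * (t powr (p - 2) - 1)) \<le> 2 * (p - 2) * t powr ((p + 2) / 2)"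
    using p by (intro mult_left_mono) auto
  moreover have "2 * (p - 2) * (1 + q * (t powr (p - 2) - 1)) = p - 6 + (p + 2) * t powr (p - 2)"
    using p by (simp add: q_def field_simps)
  ultimately show ?thesis by linarith
qed

lemma integral_ge_const_on_interval:
  fixes f :: "real \<Rightarrow> real"
  assumes f: "integrable lborel f" and nn: "\<And>x. 0 \<le> f x" and ab: "a \<le> b"
    and c: "\<And>x. x \<in> {a..b} \<Longrightarrow> c \<le> f x"
  shows "c * (b - a) \<le> (LINT x|lborel. f x)"
proof (cases "c \<le> 0")
  case True
  then have "c * (b - a) \<le> 0" using ab by (simp add: mult_nonpos_nonneg)
  also have "0 \<le> (LINT x|lborel. f x)" using nn by simp
  finally show ?thesis .
next
  case False
  have "(LINT x|lborel. c * indicator {a..b} x) \<le> (LINT x|lborel. f x)"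
  proof (rule integral_mono[OF _ f])
    show "integrable lborel (\<lambda>x. c * indicat_real {a..b} x)"
      by (simp add: integrable_indicator_iff emeasure_lborel_Icc_eq)
    show "c * indicat_real {a..b} x \<le> f x" for x
      using c nn False by (auto simp: indicator_def)
  qed
  also have "(LINT x|lborel. c * indicator {a..b} x) = c * (b - a)"
    using ab by simp
  finally show ?thesis by simp
qed

lemma integral_pos_of_continuous_pos_at:
  fixes f :: "real \<Rightarrow> real"
  assumes i: "integrable lborel f" and nn: "\<And>x. 0 \<le> f x" and c: "isCont f a" and pos: "0 < f a"
  shows "0 < (LINT x|lborel. f x)"
proof -
  obtain d where d: "d > 0" "\<And>x. dist x a < d \<Longrightarrow> dist (f x) (f a) < f a / 2"
    using c pos unfolding continuous_at_eps_delta by (metis half_gt_zero)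
  have "f a / 2 * ((a + d/2) - (a - d/2)) \<le> (LINT x|lborel. f x)"
  proof (rule integral_ge_const_on_interval[OF i nn])
    fix x assume "x \<in> {a - d/2..a + d/2}"
    then have "dist x a < d" using d by (auto simp: dist_real_def)
    then have "\<bar>f x - f a\<bar> < f a / 2" using d(2) by (simp add: dist_real_def)
    then show "f a / 2 \<le> f x" by linarith
  qed (use d in auto)
  moreover have "0 < f a / 2 * ((a + d/2) - (a - d/2))" using d pos by simp
  ultimately show ?thesis by linarith
qed

lemma cInf_eq_lim:
  fixes S :: "real set" and a :: "nat \<Rightarrow> real"
  assumes lb: "\<And>s. s \<in> S \<Longrightarrow> c \<le> s" and aS: "\<And>n. a n \<in> S" and lim: "a \<longlonglongrightarrow> c"
  shows "Inf S = c"
proof (rule cInf_eq_non_empty)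
  show "S \<noteq> {}" using aS by blast
  show "\<And>x. x \<in> S \<Longrightarrow> c \<le> x" by (rule lb)
  fix y assume y: "\<And>x. x \<in> S \<Longrightarrow> y \<le> x"
  show "y \<le> c" by (rule LIMSEQ_le_const[OF lim]) (use y aS in blast)
qed

lemma continuous_vanishing_at_infinity_bounded:
  fixes V :: "real \<Rightarrow> real"
  assumes cV: "continuous_on UNIV V" and lim: "(V \<longlongrightarrow> 0) at_infinity"
  shows "\<exists>C. \<forall>x. \<bar>V x\<bar> \<le> C"
proof -
  have "eventually (\<lambda>x. dist (V x) 0 < 1) at_infinity"
    using lim by (rule tendstoD) simp
  then obtain b where b: "\<And>x. b \<le> norm x \<Longrightarrow> dist (V x) 0 < 1"
    unfolding eventually_at_infinity by blast
  have "compact (V ` {-b..b})"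
    by (rule compact_continuous_image[OF continuous_on_subset[OF cV]]) auto
  then obtain C1 where C1: "\<And>y. y \<in> V ` {-b..b} \<Longrightarrow> norm y \<le> C1"
    using compact_imp_bounded bounded_iff by metis
  have "\<bar>V x\<bar> \<le> max C1 1" for x
  proof (cases "b \<le> norm x")
    case True then show ?thesis using b[of x] by simp
  next
    case False then have "x \<in> {-b..b}" by auto
    then show ?thesis using C1[of "V x"] by force
  qed
  then show ?thesis by blast
qed

lemma integral_shift_vanishing_tendsto_0:
  fixes V f :: "real \<Rightarrow> real"
  assumes cV: "continuous_on UNIV V" and lim: "(V \<longlongrightarrow> 0) at_infinity"
    and f: "integrable lborel f"
  shows "(\<lambda>n. LINT x|lborel. V x * f (x - real n)) \<longlonglongrightarrow> 0"
proof -
  obtain C where C: "\<And>x. \<bar>V x\<bar> \<le> C"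
    using continuous_vanishing_at_infinity_bounded[OF cV lim] by blast
  have [measurable]: "V \<in> borel_measurable borel" using cV by (rule borel_measurable_continuous_onI)
  have [measurable]: "f \<in> borel_measurable borel" using f by auto
  have shift: "(LINT x|lborel. V x * f (x - real n)) = (LINT x|lborel. V (real n + x) * f x)" for n
    using lborel_integral_real_affine[of 1 "\<lambda>x. V x * f (x - real n)" "real n"] by simp
  have "(\<lambda>n. LINT x|lborel. V (real n + x) * f x) \<longlonglongrightarrow> (LINT (x::real)|lborel. (0::real))"
  proof (rule integral_dominated_convergence[where w="\<lambda>x. C * \<bar>f x\<bar>"])
    show "integrable lborel (\<lambda>x. C * \<bar>f x\<bar>)" using f by simp
    show "AE x in lborel. (\<lambda>n. V (real n + x) * f x) \<longlonglongrightarrow> 0"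
    proof (intro AE_I2)
      fix x
      have "filterlim (\<lambda>n. x + real n) at_top sequentially"
        by (rule filterlim_tendsto_add_at_top[OF tendsto_const filterlim_real_sequentially])
      then have "filterlim (\<lambda>n. real n + x) at_infinity sequentially"
        by (simp add: add.commute filterlim_at_top_imp_at_infinity)
      then have "(\<lambda>n. V (real n + x)) \<longlonglongrightarrow> 0" by (rule filterlim_compose[OF lim])
      then show "(\<lambda>n. V (real n + x) * f x) \<longlonglongrightarrow> 0" by (rule tendsto_mult_left_zero)
    qed
    show "AE x in lborel. norm (V (real n + x) * f x) \<le> C * \<bar>f x\<bar>" for n
      using C[of "real n + x" for x] by (auto intro!: AE_I2 simp: abs_mult mult_right_mono)
  qed auto
  then show ?thesis unfolding shift by simp
qed

lemma right_steps_nonincreasing_imp_le: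
  fixes D :: "real \<Rightarrow> real"
  assumes ab: "a \<le> b" and cD: "continuous_on {a..b} D"
    and step: "\<And>x. a \<le> x \<Longrightarrow> x < b \<Longrightarrow> \<exists>d>0. \<forall>y. x < y \<and> y < x + d \<and> y \<le> b \<longrightarrow> D y \<le> D x"
  shows "D b \<le> D a"
proof -
  define T where "T = {a..b} \<inter> D -` {..D a}"
  have cT: "closed T" unfolding T_def
    by (rule continuous_closed_preimage[OF cD]) auto
  have aT: "a \<in> T" using ab by (auto simp: T_def)
  have bT: "bdd_above T" unfolding T_def by (auto intro: bdd_aboveI[of _ b])
  define s where "s = Sup T"
  have "s \<in> T" unfolding s_def using closed_contains_Sup[OF _ bT cT] aT by auto
  then have sab: "a \<le> s" "s \<le> b" and Ds: "D s \<le> D a" by (auto simp: T_def)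
  have "s = b"
  proof (rule ccontr)
    assume "s \<noteq> b"
    with sab have sb: "s < b" by auto
    from step[OF sab(1) sb] obtain d
      where d: "d > 0" "\<forall>y. s < y \<and> y < s + d \<and> y \<le> b \<longrightarrow> D y \<le> D s" by auto
    define y where "y = min (s + d/2) b"
    have y: "s < y" "y < s + d" "y \<le> b" using d sb by (auto simp: y_def)
    then have "y \<in> T" using d y sab Ds by (auto simp: T_def)
    then have "y \<le> s" unfolding s_def using bT by (rule cSup_upper)
    then show False using y by auto
  qed
  then show ?thesis using Ds by simp
qed

lemma abs_increment_le_of_right_steps:
  fixes D I :: "real \<Rightarrow> real"
  assumes ab: "a \<le> b" and cD: "continuous_on {a..b} D" and cI: "continuous_on {a..b} I"
    and step: "\<And>x. a \<le> x \<Longrightarrow> x < b \<Longrightarrow>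
      \<exists>d>0. \<forall>y. x < y \<and> y < x + d \<and> y \<le> b \<longrightarrow> \<bar>D y - D x\<bar> \<le> I y - I x"
  shows "\<bar>D b - D a\<bar> \<le> I b - I a"
proof -
  have "\<sigma> * D b - I b \<le> \<sigma> * D a - I a" if \<sigma>: "\<sigma> = 1 \<or> \<sigma> = -1" for \<sigma> :: real
  proof (rule right_steps_nonincreasing_imp_le[OF ab, where D = "\<lambda>t. \<sigma> * D t - I t"])
    show "continuous_on {a..b} (\<lambda>t. \<sigma> * D t - I t)"
      by (intro continuous_intros cD cI)
    fix x assume "a \<le> x" "x < b"
    then obtain d where "d > 0"
      and d: "\<forall>y. x < y \<and> y < x + d \<and> y \<le> b \<longrightarrow> \<bar>D y - D x\<bar> \<le> I y - I x"
      using step by blast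
    have "\<sigma> * D y - I y \<le> \<sigma> * D x - I x" if "x < y \<and> y < x + d \<and> y \<le> b" for y
    proof -
      have "\<sigma> * D y - \<sigma> * D x \<le> \<bar>D y - D x\<bar>" using \<sigma> by auto
      then show ?thesis using d[rule_format, OF that] by linarith
    qed
    then show "\<exists>d>0. \<forall>y. x < y \<and> y < x + d \<and> y \<le> b \<longrightarrow> \<sigma> * D y - I y \<le> \<sigma> * D x - I x"
      using \<open>d > 0\<close> by blast
  qed
  from this[of 1] this[of "-1"] show ?thesis by (simp add: abs_le_iff)
qed

section \<open>The space \<open>H\<^sup>1\<close> on the line\<close>

lemma sets_lborel_eq_sigma_Icc:
  "sets (lborel::real measure) = sigma_sets UNIV (range (\<lambda>(a,b). {a..b::real}))"
proof -
  have "sets (lborel::real measure) = sets (sigma UNIV (range (\<lambda>(a,b). {a..b::real})))"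
    by (subst borel_eq_atLeastAtMost[symmetric]) simp
  also have "\<dots> = sigma_sets UNIV (range (\<lambda>(a,b). {a..b::real}))"
    by (rule sets_measure_of) simp
  finally show ?thesis .
qed

lemma Int_stable_Icc: "Int_stable (range (\<lambda>(a,b). {a..b::real}))"
proof (rule Int_stableI)
  fix A B assume "A \<in> range (\<lambda>(a,b). {a..b::real})" "B \<in> range (\<lambda>(a,b). {a..b::real})"
  then obtain a b c d where "A = {a..b}" "B = {c..d}" by auto
  then have "A \<inter> B = (\<lambda>(a,b). {a..b}) (max a c, min b d)" by auto
  then show "A \<inter> B \<in> range (\<lambda>(a,b). {a..b::real})" by blast
qed

lemma set_integral_zero_if_zero_on_Icc:
  fixes g :: "real \<Rightarrow> 'b::{banach, second_countable_topology}"
  assumes ig: "integrable lborel g" and total: "integral\<^sup>L lborel g = 0"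
    and on_Icc: "\<And>a b. set_lebesgue_integral lborel {a..b} g = 0"
    and A: "A \<in> sets lborel"
  shows "set_lebesgue_integral lborel A g = 0"
proof -
  have Icc_Pow: "range (\<lambda>(a,b). {a..b::real}) \<subseteq> Pow UNIV" by simp
  have "A \<in> sigma_sets UNIV (range (\<lambda>(a,b). {a..b::real}))"
    using A sets_lborel_eq_sigma_Icc by simp
  with Int_stable_Icc Icc_Pow show ?thesis
  proof (induct rule: sigma_sets_induct_disjoint)
    case (basic A) then show ?case using on_Icc by auto
  next
    case empty then show ?case by (simp add: set_lebesgue_integral_def)
  next
    case (compl A)
    have "A \<in> sets lborel" using compl(1) sets_lborel_eq_sigma_Icc by simp
    have "set_lebesgue_integral lborel (UNIV - A) g
        = integral\<^sup>L lborel (\<lambda>x. g x - indicat_real A x *\<^sub>R g x)"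
      unfolding set_lebesgue_integral_def
      by (intro Bochner_Integration.integral_cong) (auto simp: indicator_def)
    also have "\<dots> = integral\<^sup>L lborel g - set_lebesgue_integral lborel A g"
      unfolding set_lebesgue_integral_def
      by (intro Bochner_Integration.integral_diff ig integrable_mult_indicator \<open>A \<in> sets lborel\<close>)
    finally show ?case using compl(2) total by simp
  next
    case (union A)
    have "A i \<in> sets lborel" for i using union(2) sets_lborel_eq_sigma_Icc by auto
    then have "set_lebesgue_integral lborel (\<Union>i. A i) g = (\<Sum>i. set_lebesgue_integral lborel (A i) g)"
      using union(1) ig
      by (intro lebesgue_integral_countable_add)
         (auto simp: disjoint_family_on_def set_integrable_def intro!: integrable_mult_indicator)
    then show ?case using union(3) by simp
  qed
qed

lemma AE_zero_if_interval_integrals_zero: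
  fixes f :: "real \<Rightarrow> complex"
  assumes int: "\<And>a b. set_integrable lborel {a..b} f"
    and zero: "\<And>a b. a \<le> b \<Longrightarrow> (LINT x:{a..b}|lborel. f x) = 0"
  shows "AE x in lborel. f x = 0"
proof -
  have "AE x in lborel. indicat_real {-real n..real n} x *\<^sub>R f x = 0" for n
  proof (rule sigma_finite_measure.density_zero[OF sigma_finite_lborel])
    define g where "g = (\<lambda>x. indicat_real {-real n..real n} x *\<^sub>R f x)"
    have ig: "integrable lborel g"
      using int[of "-real n" "real n"] unfolding g_def set_integrable_def .
    then show "integrable lborel (\<lambda>x. indicat_real {-real n..real n} x *\<^sub>R f x)" unfolding g_def .
    have on_Icc: "set_lebesgue_integral lborel {a..b} g = 0" for a b
    proof -
      have "set_lebesgue_integral lborel {a..b} g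
          = set_lebesgue_integral lborel {max a (-real n)..min b (real n)} f"
        unfolding g_def set_lebesgue_integral_def
        by (intro Bochner_Integration.integral_cong) (auto simp: indicator_def)
      then show ?thesis
        using zero[of "max a (-real n)" "min b (real n)"]
        by (cases "max a (-real n) \<le> min b (real n)") (auto simp: set_lebesgue_integral_def)
    qed
    have total: "integral\<^sup>L lborel g = 0"
      using on_Icc[of "-real n" "real n"] zero[of "-real n" "real n"]
      unfolding g_def set_lebesgue_integral_def by simp
    show "set_lebesgue_integral lborel A (\<lambda>x. indicat_real {-real n..real n} x *\<^sub>R f x) = 0"
      if "A \<in> sets lborel" for A
      using set_integral_zero_if_zero_on_Icc[OF ig total on_Icc that] unfolding g_def .
  qed
  then have "AE x in lborel. \<forall>n. indicat_real {-real n..real n} x *\<^sub>R f x = 0"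
    unfolding AE_all_countable by blast
  then show ?thesis
  proof (rule AE_mp, intro AE_I2 impI)
    fix x assume h: "\<forall>n. indicat_real {-real n..real n} x *\<^sub>R f x = 0"
    obtain n where "\<bar>x\<bar> \<le> real n" using real_arch_simple by blast
    then show "f x = 0" using h[rule_format, of n] by (simp add: indicator_def abs_le_iff)
  qed
qed

lemma weak_deriv_L2_unique:
  assumes "weak_deriv_L2 u w1" "weak_deriv_L2 u w2"
  shows "AE x in lborel. w1 x = w2 x"
proof -
  have "AE x in lborel. w1 x - w2 x = 0"
  proof (rule AE_zero_if_interval_integrals_zero)
    fix a b :: real
    show "set_integrable lborel {a..b} (\<lambda>x. w1 x - w2 x)"
    proof (cases "a \<le> b")
      case True then show ?thesis
        using assms unfolding weak_deriv_L2_def by (intro set_integral_diff) auto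
    qed (simp add: set_integrable_def)
    assume "a \<le> b"
    then show "(LINT x:{a..b}|lborel. w1 x - w2 x) = 0"
      using assms unfolding weak_deriv_L2_def by (simp add: set_integral_diff(2))
  qed
  then show ?thesis by auto
qed

lemma weak_deriv_L2_dH1: "H1 u \<Longrightarrow> weak_deriv_L2 u (dH1 u)"
  unfolding H1_def dH1_def by (metis someI_ex)

lemma integral_dH1_norm_sq:
  assumes H: "H1 u" and wd: "weak_deriv_L2 u w"
  shows "(LINT x|lborel. (cmod (dH1 u x))\<^sup>2) = (LINT x|lborel. (cmod (w x))\<^sup>2)"
proof (rule integral_cong_AE)
  show "AE x in lborel. (cmod (dH1 u x))\<^sup>2 = (cmod (w x))\<^sup>2"
    using weak_deriv_L2_unique[OF weak_deriv_L2_dH1[OF H] wd] by (auto elim: AE_mp)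
qed (use wd weak_deriv_L2_dH1[OF H] in \<open>auto simp: weak_deriv_L2_def\<close>)

lemma weak_deriv_L2_of_real_C1:
  fixes f f' :: "real \<Rightarrow> real"
  assumes deriv: "\<And>x. (f has_real_derivative f' x) (at x)"
    and cont: "continuous_on UNIV f'" and i2: "integrable lborel (\<lambda>x. (f' x)\<^sup>2)"
  shows "weak_deriv_L2 (\<lambda>x. complex_of_real (f x)) (\<lambda>x. complex_of_real (f' x))"
  unfolding weak_deriv_L2_def
proof (intro conjI allI impI)
  let ?u = "\<lambda>x. complex_of_real (f x)" and ?w = "\<lambda>x. complex_of_real (f' x)"
  show "?w \<in> borel_measurable lborel"
    unfolding measurable_lborel2 by (intro borel_measurable_continuous_onI continuous_intros cont)
  show "integrable lborel (\<lambda>x. (cmod (?w x))\<^sup>2)" using i2 by simp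
  fix a b :: real assume ab: "a \<le> b"
  have cw: "continuous_on {a..b} ?w"
    by (intro continuous_intros continuous_on_subset[OF cont]) auto
  then show "set_integrable lborel {a..b} ?w"
    by (rule borel_integrable_atLeastAtMost')
  have "(LBINT x=a..b. ?w x) = ?u b - ?u a"
  proof (rule interval_integral_FTC_finite)
    show "continuous_on {min a b..max a b} ?w" using cw ab by simp
    show "(?u has_vector_derivative ?w x) (at x within {min a b..max a b})" for x
      using has_vector_derivative_of_real[OF deriv[of x]] by (rule has_vector_derivative_at_within)
  qed
  then show "?u b - ?u a = (LINT x:{a..b}|lborel. ?w x)"
    using interval_integral_Icc[OF ab, of ?w] by simp
qed

lemma H1_of_real_C1:
  fixes f f' :: "real \<Rightarrow> real"
  assumes deriv: "\<And>x. (f has_real_derivative f' x) (at x)"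
    and cont: "continuous_on UNIV f'"
    and i1: "integrable lborel (\<lambda>x. (f x)\<^sup>2)"
    and i2: "integrable lborel (\<lambda>x. (f' x)\<^sup>2)"
  shows "H1 (\<lambda>x. complex_of_real (f x))"
    and "(LINT x|lborel. (cmod (dH1 (\<lambda>x. complex_of_real (f x)) x))\<^sup>2) = (LINT x|lborel. (f' x)\<^sup>2)"
proof -
  note wd = weak_deriv_L2_of_real_C1[OF deriv cont i2]
  have "continuous_on UNIV (\<lambda>x. complex_of_real (f x))"
    using deriv by (intro continuous_on_of_real)
       (meson DERIV_continuous continuous_at_imp_continuous_on)
  then show H: "H1 (\<lambda>x. complex_of_real (f x))" unfolding H1_def using wd i1 by auto
  show "(LINT x|lborel. (cmod (dH1 (\<lambda>x. complex_of_real (f x)) x))\<^sup>2) = (LINT x|lborel. (f' x)\<^sup>2)"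
    using integral_dH1_norm_sq[OF H wd] by simp
qed

lemma weak_deriv_L2_increment_bound:
  assumes wd: "weak_deriv_L2 u w" and ab: "a \<le> b"
  shows "(\<lambda>t. cmod (w t)) integrable_on {a..b}"
    and "cmod (u b - u a) \<le> integral {a..b} (\<lambda>t. cmod (w t))"
proof -
  have si: "set_integrable lborel {a..b} w" and e: "u b - u a = (LINT x:{a..b}|lborel. w x)"
    using wd ab unfolding weak_deriv_L2_def by auto
  have sn: "set_integrable lborel {a..b} (\<lambda>t. cmod (w t))"
    by (rule set_integrable_norm[OF si])
  show "(\<lambda>t. cmod (w t)) integrable_on {a..b}"
    by (rule set_borel_integral_eq_integral(1)[OF sn])
  have "cmod (u b - u a) \<le> (LINT x:{a..b}|lborel. cmod (w x))"
    unfolding e by (rule set_integral_norm_bound[OF si])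
  also have "\<dots> = integral {a..b} (\<lambda>t. cmod (w t))"
    by (rule set_borel_integral_eq_integral(2)[OF sn])
  finally show "cmod (u b - u a) \<le> integral {a..b} (\<lambda>t. cmod (w t))" .
qed

lemma weak_deriv_L2_increment_le_const:
  assumes wd: "weak_deriv_L2 u w"
    and bound: "AE t in lborel. t \<in> {min a b..max a b} \<longrightarrow> cmod (w t) \<le> c"
  shows "cmod (u b - u a) \<le> c * \<bar>b - a\<bar>"
proof -
  have ordered: "cmod (u y - u x) \<le> c * (y - x)"
    if xy: "x \<le> y" and bound: "AE t in lborel. t \<in> {x..y} \<longrightarrow> cmod (w t) \<le> c" for x y
  proof -
    have si: "set_integrable lborel {x..y} w" and e: "u y - u x = (LINT t:{x..y}|lborel. w t)"
      using wd xy unfolding weak_deriv_L2_def by auto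
    have "cmod (u y - u x) \<le> (LINT t:{x..y}|lborel. cmod (w t))"
      unfolding e by (rule set_integral_norm_bound[OF si])
    also have "\<dots> \<le> (LINT t:{x..y}|lborel. c)"
      using bound by (intro set_integral_mono_AE set_integrable_norm[OF si]
          borel_integrable_atLeastAtMost' continuous_on_const) simp
    also have "\<dots> = c * (y - x)"
      using xy by (simp add: set_integral_const measure_lborel_Icc)
    finally show ?thesis .
  qed
  show ?thesis
  proof (cases "a \<le> b")
    case True then show ?thesis using ordered[of a b] bound by simp
  next
    case False then show ?thesis using ordered[of b a] bound by (simp add: norm_minus_commute)
  qed
qed

lemma weak_deriv_L2_increment_le_energy:
  assumes wd: "weak_deriv_L2 u w" and xy: "x \<le> y"
  shows "cmod (u y - u x) \<le> (y - x) / 2 + (LINT t|lborel. (cmod (w t))\<^sup>2) / 2"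
proof -
  have si: "set_integrable lborel {x..y} w" and e: "u y - u x = (LINT t:{x..y}|lborel. w t)"
    and iw: "integrable lborel (\<lambda>t. (cmod (w t))\<^sup>2)"
    using wd xy unfolding weak_deriv_L2_def by auto
  have iI: "integrable lborel (indicat_real {x..y})"
    by (simp add: integrable_indicator_iff emeasure_lborel_Icc_eq)
  have "cmod (u y - u x) \<le> (LINT t:{x..y}|lborel. cmod (w t))"
    unfolding e by (rule set_integral_norm_bound[OF si])
  also have "\<dots> = (LINT t|lborel. indicator {x..y} t * cmod (w t))"
    by (simp add: set_lebesgue_integral_def)
  also have "\<dots> \<le> (LINT t|lborel. indicator {x..y} t / 2 + (cmod (w t))\<^sup>2 / 2)"
  proof (rule integral_mono)
    show "integrable lborel (\<lambda>t. indicat_real {x..y} t * cmod (w t))"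
      using set_integrable_norm[OF si] by (simp add: set_integrable_def)
    show "integrable lborel (\<lambda>t. indicat_real {x..y} t / 2 + (cmod (w t))\<^sup>2 / 2)"
      using iw iI by simp
    fix t
    have "indicat_real {x..y} t * cmod (w t) \<le> (indicat_real {x..y} t)\<^sup>2 / 2 + (cmod (w t))\<^sup>2 / 2"
      using sum_squares_bound[of "indicat_real {x..y} t" "cmod (w t)"] by (simp add: field_simps)
    also have "(indicat_real {x..y} t)\<^sup>2 = indicat_real {x..y} t" by (simp add: indicator_def)
    finally show "indicat_real {x..y} t * cmod (w t) \<le> indicat_real {x..y} t / 2 + (cmod (w t))\<^sup>2 / 2" .
  qed
  also have "\<dots> = (y - x) / 2 + (LINT t|lborel. (cmod (w t))\<^sup>2) / 2"
    using iw iI xy by (subst Bochner_Integration.integral_add) auto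
  finally show ?thesis .
qed

lemma H1_small_value_left:
  assumes H: "H1 u" and e: "0 < e"
  shows "\<exists>a. a < R \<and> cmod (u a) < e"
proof (rule ccontr)
  assume "\<not> ?thesis"
  then have ge: "\<And>a. a < R \<Longrightarrow> e \<le> cmod (u a)" by (meson leD not_less)
  have iu: "integrable lborel (\<lambda>x. (cmod (u x))\<^sup>2)" using H unfolding H1_def by auto
  obtain n :: nat where n: "mass u / e\<^sup>2 < real n" using reals_Archimedean2 by blast
  have "e\<^sup>2 * ((R - 1) - (R - 1 - real n)) \<le> mass u"
    unfolding mass_def
  proof (rule integral_ge_const_on_interval[OF iu])
    fix x assume "x \<in> {R - 1 - real n..R - 1}"
    then show "e\<^sup>2 \<le> (cmod (u x))\<^sup>2" using ge[of x] e by (intro power_mono) auto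
  qed auto
  then show False using n e by (simp add: field_simps)
qed

lemma H1_small_value_right:
  assumes H: "H1 u" and e: "0 < e"
  shows "\<exists>b. R < b \<and> cmod (u b) < e"
proof (rule ccontr)
  assume "\<not> ?thesis"
  then have ge: "\<And>b. R < b \<Longrightarrow> e \<le> cmod (u b)" by (meson leD not_less)
  have iu: "integrable lborel (\<lambda>x. (cmod (u x))\<^sup>2)" using H unfolding H1_def by auto
  obtain n :: nat where n: "mass u / e\<^sup>2 < real n" using reals_Archimedean2 by blast
  have "e\<^sup>2 * ((R + 1 + real n) - (R + 1)) \<le> mass u"
    unfolding mass_def
  proof (rule integral_ge_const_on_interval[OF iu])
    fix x assume "x \<in> {R + 1..R + 1 + real n}"
    then show "e\<^sup>2 \<le> (cmod (u x))\<^sup>2" using ge[of x] e by (intro power_mono) auto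
  qed auto
  then show False using n e by (simp add: field_simps)
qed

lemma H1_bounded:
  assumes H: "H1 u"
  shows "\<exists>C. \<forall>x. cmod (u x) \<le> C"
proof -
  obtain w where wd: "weak_deriv_L2 u w" using H unfolding H1_def by auto
  have iu: "integrable lborel (\<lambda>x. (cmod (u x))\<^sup>2)" using H unfolding H1_def by auto
  define q where "q = (LINT t|lborel. (cmod (w t))\<^sup>2)"
  have "cmod (u x) \<le> sqrt (mass u + 1) + 1 / 2 + q / 2" for x
  proof -
    obtain y where y: "y \<in> {x..x+1}" "(cmod (u y))\<^sup>2 < mass u + 1"
    proof (rule ccontr)
      assume "\<not> thesis"
      then have "\<And>y. y \<in> {x..x+1} \<Longrightarrow> mass u + 1 \<le> (cmod (u y))\<^sup>2" using that by force
      then have "(mass u + 1) * ((x + 1) - x) \<le> mass u" unfolding mass_def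
        by (intro integral_ge_const_on_interval[OF iu]) auto
      then show False by simp
    qed
    have "cmod (u y) \<le> sqrt (mass u + 1)"
      using y(2) by (metis abs_norm_cancel real_le_rsqrt less_eq_real_def)
    moreover have "cmod (u y - u x) \<le> (y - x) / 2 + q / 2"
      using weak_deriv_L2_increment_le_energy[OF wd, of x y] y(1) unfolding q_def by auto
    moreover have "cmod (u x) \<le> cmod (u y) + cmod (u y - u x)"
      by (metis norm_triangle_sub add.commute norm_minus_commute)
    moreover have "(y - x) / 2 \<le> 1 / 2" using y(1) by simp
    ultimately show ?thesis by linarith
  qed
  then show ?thesis by blast
qed

lemma H1_weighted_sq_integrable:
  fixes V :: "real \<Rightarrow> real"
  assumes H: "H1 u" and V: "V \<in> borel_measurable borel" and C: "\<And>x. \<bar>V x\<bar> \<le> C"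
  shows "integrable lborel (\<lambda>x. V x * (cmod (u x))\<^sup>2)"
proof (rule Bochner_Integration.integrable_bound)
  have [measurable]: "u \<in> borel_measurable borel"
    using H unfolding H1_def by (auto intro: borel_measurable_continuous_onI)
  show "integrable lborel (\<lambda>x. C * (cmod (u x))\<^sup>2)" using H unfolding H1_def by simp
  show "(\<lambda>x. V x * (cmod (u x))\<^sup>2) \<in> borel_measurable lborel" using V by measurable
  have "\<bar>V x\<bar> * (cmod (u x))\<^sup>2 \<le> \<bar>C\<bar> * (cmod (u x))\<^sup>2" for x
    using C[of x] by (intro mult_right_mono) auto
  then show "AE x in lborel. norm (V x * (cmod (u x))\<^sup>2) \<le> norm (C * (cmod (u x))\<^sup>2)"
    by (intro AE_I2) (simp add: abs_mult)
qed

lemma weak_deriv_L2_vanishing_spreads: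
  assumes wd: "weak_deriv_L2 u w" and bdd: "\<And>x. cmod (u x) \<le> M"
    and lin: "AE x in lborel. cmod (w x) \<le> L * cmod (u x)" and L: "0 \<le> L"
    and uz: "u z = 0" and d: "0 < d" and Ld: "L * d \<le> 1/2"
  shows "\<And>x. x \<in> {z-d..z+d} \<Longrightarrow> u x = 0"
proof -
  define S where "S = (\<lambda>t. cmod (u t)) ` {z-d..z+d}"
  define m where "m = Sup S"
  have S_ne: "S \<noteq> {}" unfolding S_def using d by auto
  have bdd_S: "bdd_above S" unfolding S_def using bdd by (auto intro!: bdd_aboveI[of _ M])
  have um: "cmod (u t) \<le> m" if "t \<in> {z-d..z+d}" for t
    unfolding m_def S_def using that bdd_S[unfolded S_def] by (auto intro!: cSup_upper)
  have "cmod (u z) \<le> m" using um d by auto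
  then have m0: "0 \<le> m" by (meson norm_ge_zero order_trans)
  have bound: "AE t in lborel. t \<in> {z-d..z+d} \<longrightarrow> cmod (w t) \<le> L * m"
    using lin
  proof (rule AE_mp, intro AE_I2 impI)
    fix t assume "cmod (w t) \<le> L * cmod (u t)" "t \<in> {z-d..z+d}"
    then show "cmod (w t) \<le> L * m" using mult_left_mono[OF um L] by (meson order_trans)
  qed
  have Lmd: "L * m * d \<le> m / 2"
    using mult_left_mono[OF Ld m0] by (simp add: algebra_simps)
  have half: "cmod (u x) \<le> m / 2" if x: "x \<in> {z-d..z+d}" for x
  proof -
    have "cmod (u x - u z) \<le> L * m * \<bar>x - z\<bar>"
      by (rule weak_deriv_L2_increment_le_const[OF wd]) (rule AE_mp[OF bound], use x in auto)
    also have "\<dots> \<le> L * m * d" using x m0 L by (intro mult_left_mono) auto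
    finally show ?thesis using uz Lmd by simp
  qed
  have "m \<le> m / 2"
  proof -
    have "y \<le> m / 2" if "y \<in> S" for y using that half by (auto simp: S_def)
    then show ?thesis unfolding m_def by (intro cSup_least[OF S_ne]) (simp add: m_def)
  qed
  then have "m \<le> 0" by simp
  then show "u x = 0" if "x \<in> {z-d..z+d}" for x
    using um[OF that] by (meson norm_le_zero_iff order_trans)
qed

lemma weak_deriv_L2_vanishing_everywhere:
  assumes wd: "weak_deriv_L2 u w" and bdd: "\<And>x. cmod (u x) \<le> M"
    and lin: "AE x in lborel. cmod (w x) \<le> L * cmod (u x)" and L: "0 \<le> L"
    and uz: "u z = 0"
  shows "u x = 0"
proof -
  define d where "d = 1 / (2 * L + 2)"
  have d: "0 < d" and Ld: "L * d \<le> 1/2" unfolding d_def using L by (auto simp: field_simps)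
  note spread = weak_deriv_L2_vanishing_spreads[OF wd bdd lin L _ d Ld]
  have "\<forall>y\<in>{z - real n * d..z + real n * d}. u y = 0" for n :: nat
  proof (induction n)
    case 0 then show ?case using uz by simp
  next
    case (Suc n)
    have left: "u (z - real n * d) = 0" and right: "u (z + real n * d) = 0"
      using Suc d by auto
    show ?case
    proof
      fix y assume y: "y \<in> {z - real (Suc n) * d..z + real (Suc n) * d}"
      consider "y \<in> {z - real n * d..z + real n * d}" | "z + real n * d < y" | "y < z - real n * d"
        by (meson atLeastAtMost_iff not_le)
      then show "u y = 0"
      proof cases
        case 1 then show ?thesis using Suc by blast
      next
        case 2 then show ?thesis using spread[OF right] y by (auto simp: algebra_simps)
      next
        case 3 then show ?thesis using spread[OF left] y by (auto simp: algebra_simps)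
      qed
    qed
  qed
  moreover obtain n :: nat where "\<bar>x - z\<bar> / d \<le> real n" using real_arch_simple by blast
  then have "x \<in> {z - real n * d..z + real n * d}" using d by (auto simp: field_simps abs_le_iff)
  ultimately show ?thesis by blast
qed

section \<open>Variation of a primitive along \<open>|u|\<close>\<close>

lemma continuous_mult_integrable_on:
  fixes f g :: "real \<Rightarrow> real"
  assumes cf: "continuous_on {a..b} f" and g: "g integrable_on {a..b}" and gnn: "\<And>t. 0 \<le> g t"
  shows "(\<lambda>t. f t * g t) integrable_on {a..b}"
proof -
  have "(\<lambda>t. f t * g t) absolutely_integrable_on {a..b}"
  proof (rule absolutely_integrable_bounded_measurable_product_real)
    show "f \<in> borel_measurable (lebesgue_on {a..b})"
      by (rule continuous_imp_measurable_on_sets_lebesgue[OF cf]) auto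
    show "bounded (f ` {a..b})"
      by (rule compact_imp_bounded[OF compact_continuous_image[OF cf]]) auto
    show "g absolutely_integrable_on {a..b}"
      by (rule nonnegative_absolutely_integrable_1[OF g gnn])
  qed auto
  then show ?thesis using set_lebesgue_integral_eq_integral(1) by blast
qed

lemma primitive_increment_le:
  fixes h :: "real \<Rightarrow> real"
  assumes ch: "continuous_on UNIV h" and hnn: "\<And>s. 0 \<le> h s"
    and r: "0 \<le> r" "0 \<le> r'" and c: "\<And>s. min r r' \<le> s \<Longrightarrow> s \<le> max r r' \<Longrightarrow> h s \<le> c"
  shows "\<bar>integral {0..r'} h - integral {0..r} h\<bar> \<le> \<bar>r' - r\<bar> * c"
proof -
  have *: "\<bar>integral {0..y} h - integral {0..x} h\<bar> \<le> (y - x) * c"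
    if xy: "0 \<le> x" "x \<le> y" and c: "\<And>s. x \<le> s \<Longrightarrow> s \<le> y \<Longrightarrow> h s \<le> c" for x y
  proof -
    have i: "h integrable_on {0..y}" and ixy: "h integrable_on {x..y}"
      by (rule integrable_continuous_real, rule continuous_on_subset[OF ch], simp)+
    have "integral {0..y} h - integral {0..x} h = integral {x..y} h"
      using Henstock_Kurzweil_Integration.integral_combine[OF xy i] by simp
    moreover have "0 \<le> integral {x..y} h"
      by (rule integral_nonneg[OF ixy]) (use hnn in auto)
    moreover have "integral {x..y} h \<le> integral {x..y} (\<lambda>_. c)"
      by (rule integral_le[OF ixy]) (use c in auto)
    ultimately show ?thesis using xy by simp
  qed
  show ?thesis
  proof (cases "r \<le> r'")
    case True then show ?thesis using *[OF r(1) True] c by auto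
  next
    case False then show ?thesis using *[OF r(2), of r] c by (auto simp: abs_minus_commute)
  qed
qed

lemma primitive_norm_increment_le_weighted:
  fixes u w :: "real \<Rightarrow> complex" and h \<rho> :: "real \<Rightarrow> real"
  assumes wd: "weak_deriv_L2 u w" and ch: "continuous_on UNIV h" and hnn: "\<And>s. 0 \<le> h s"
    and c\<rho>: "continuous_on {x..y} \<rho>" and xy: "x \<le> y"
    and h_le: "\<And>s. min (cmod (u x)) (cmod (u y)) \<le> s \<Longrightarrow> s \<le> max (cmod (u x)) (cmod (u y)) \<Longrightarrow> h s \<le> c"
    and \<rho>_ge: "\<And>t. t \<in> {x..y} \<Longrightarrow> c \<le> \<rho> t"
  shows "\<bar>integral {0..cmod (u y)} h - integral {0..cmod (u x)} h\<bar> \<le> integral {x..y} (\<lambda>t. \<rho> t * cmod (w t))"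
proof -
  have iw: "(\<lambda>t. cmod (w t)) integrable_on {x..y}"
    and incr: "cmod (u y - u x) \<le> integral {x..y} (\<lambda>t. cmod (w t))"
    using weak_deriv_L2_increment_bound[OF wd xy] by auto
  have c0: "0 \<le> c" using h_le[of "cmod (u x)"] hnn[of "cmod (u x)"] by simp
  have "\<bar>cmod (u y) - cmod (u x)\<bar> \<le> cmod (u y - u x)" by (rule norm_triangle_ineq3)
  have "\<bar>integral {0..cmod (u y)} h - integral {0..cmod (u x)} h\<bar> \<le> \<bar>cmod (u y) - cmod (u x)\<bar> * c"
    by (rule primitive_increment_le[OF ch hnn]) (use h_le in auto)
  also have "\<dots> \<le> integral {x..y} (\<lambda>t. c * cmod (w t))"
    using mult_right_mono[OF order_trans[OF norm_triangle_ineq3 incr] c0] by (simp add: mult.commute)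
  also have "\<dots> \<le> integral {x..y} (\<lambda>t. \<rho> t * cmod (w t))"
  proof (rule integral_le)
    show "(\<lambda>t. c * cmod (w t)) integrable_on {x..y}"
      using integrable_on_cmult_left[OF iw] by simp
    show "(\<lambda>t. \<rho> t * cmod (w t)) integrable_on {x..y}"
      by (rule continuous_mult_integrable_on[OF c\<rho> iw]) simp
    show "c * cmod (w t) \<le> \<rho> t * cmod (w t)" if "t \<in> {x..y}" for t
      using \<rho>_ge[OF that] by (intro mult_right_mono) auto
  qed
  finally show ?thesis .
qed

lemma primitive_norm_increment_local:
  fixes u w :: "real \<Rightarrow> complex" and h :: "real \<Rightarrow> real"
  assumes wd: "weak_deriv_L2 u w" and cu: "continuous_on UNIV u"
    and ch: "continuous_on UNIV h" and hnn: "\<And>s. 0 \<le> h s" and e: "0 < e"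
  shows "\<exists>d>0. \<forall>y. x < y \<and> y < x + d \<longrightarrow>
     \<bar>integral {0..cmod (u y)} h - integral {0..cmod (u x)} h\<bar>
       \<le> integral {x..y} (\<lambda>t. (h (cmod (u t)) + e) * cmod (w t))"
proof -
  define r where "r = cmod (u x)"
  have "isCont h r" using ch by (simp add: continuous_on_eq_continuous_at)
  then obtain d1 where d1: "d1 > 0" "\<And>s. \<bar>s - r\<bar> < d1 \<Longrightarrow> \<bar>h s - h r\<bar> < e/2"
    using e unfolding continuous_at_eps_delta dist_real_def by (metis half_gt_zero)
  have "isCont u x" using cu by (simp add: continuous_on_eq_continuous_at)
  then obtain d where d: "d > 0" "\<And>t. dist t x < d \<Longrightarrow> dist (u t) (u x) < d1"
    using d1(1) unfolding continuous_at_eps_delta by metis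
  have norm_near: "\<bar>cmod (u t) - r\<bar> < d1" if "dist t x < d" for t
    using d(2)[OF that] norm_triangle_ineq3[of "u t" "u x"] unfolding r_def dist_norm by linarith
  have "\<bar>integral {0..cmod (u y)} h - integral {0..r} h\<bar>
          \<le> integral {x..y} (\<lambda>t. (h (cmod (u t)) + e) * cmod (w t))"
    if y: "x < y" "y < x + d" for y
    unfolding r_def
  proof (rule primitive_norm_increment_le_weighted[OF wd ch hnn, where c = "h r + e/2"])
    show "continuous_on {x..y} (\<lambda>t. h (cmod (u t)) + e)"
      by (intro continuous_intros continuous_on_compose2[OF ch] continuous_on_subset[OF cu]) auto
    show "h s \<le> h r + e/2"
      if "min (cmod (u x)) (cmod (u y)) \<le> s" "s \<le> max (cmod (u x)) (cmod (u y))" for s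
    proof -
      have "\<bar>s - r\<bar> < d1" using norm_near[of y] that y by (auto simp: r_def dist_real_def)
      then have "\<bar>h s - h r\<bar> < e/2" by (rule d1(2))
      then show ?thesis by linarith
    qed
    show "h r + e/2 \<le> h (cmod (u t)) + e" if "t \<in> {x..y}" for t
    proof -
      have "dist t x < d" using that y by (auto simp: dist_real_def)
      then have "\<bar>h (cmod (u t)) - h r\<bar> < e/2" by (intro d1(2) norm_near)
      then show ?thesis by linarith
    qed
  qed (use y in simp)
  then show ?thesis using d(1) unfolding r_def by blast
qed

lemma continuous_on_primitive_comp_norm:
  fixes u :: "real \<Rightarrow> complex" and h :: "real \<Rightarrow> real"
  assumes cu: "continuous_on UNIV u" and ch: "continuous_on UNIV h"
  shows "continuous_on {a..b} (\<lambda>t. integral {0..cmod (u t)} h)"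
proof -
  have "compact ((\<lambda>t. cmod (u t)) ` {a..b})"
    by (intro compact_continuous_image continuous_intros continuous_on_subset[OF cu]) auto
  then have "bounded ((\<lambda>t. cmod (u t)) ` {a..b})" by (rule compact_imp_bounded)
  then obtain R where R: "\<forall>t\<in>{a..b}. norm (cmod (u t)) \<le> R" unfolding bounded_iff by auto
  show ?thesis
  proof (rule continuous_on_compose2[of "{0..R}" "\<lambda>s. integral {0..s} h"])
    show "continuous_on {0..R} (\<lambda>s. integral {0..s} h)"
      by (intro indefinite_integral_continuous_1 integrable_continuous_real
          continuous_on_subset[OF ch]) auto
  qed (use R in \<open>auto intro!: continuous_intros continuous_on_subset[OF cu]\<close>)
qed

lemma primitive_norm_increment_le_eps:
  fixes u w :: "real \<Rightarrow> complex" and h :: "real \<Rightarrow> real"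
  assumes wd: "weak_deriv_L2 u w" and cu: "continuous_on UNIV u"
    and ch: "continuous_on UNIV h" and hnn: "\<And>s. 0 \<le> h s" and ab: "a \<le> b" and e: "0 < e"
  shows "\<bar>integral {0..cmod (u b)} h - integral {0..cmod (u a)} h\<bar>
          \<le> integral {a..b} (\<lambda>t. (h (cmod (u t)) + e) * cmod (w t))"
proof -
  define H where "H s = integral {0..s} h" for s
  define g where "g t = (h (cmod (u t)) + e) * cmod (w t)" for t
  define I where "I y = integral {a..y} g" for y
  have gi: "g integrable_on {x..y}" if "x \<le> y" for x y
    unfolding g_def
    by (intro continuous_mult_integrable_on[OF _ weak_deriv_L2_increment_bound(1)[OF wd that]]
        continuous_intros continuous_on_compose2[OF ch] continuous_on_subset[OF cu]) auto
  have "\<bar>H (cmod (u b)) - H (cmod (u a))\<bar> \<le> I b - I a"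
  proof (rule abs_increment_le_of_right_steps[OF ab])
    show "continuous_on {a..b} (\<lambda>t. H (cmod (u t)))"
      unfolding H_def by (rule continuous_on_primitive_comp_norm[OF cu ch])
    show "continuous_on {a..b} I"
      unfolding I_def by (rule indefinite_integral_continuous_1[OF gi[OF ab]])
    fix x assume "a \<le> x" "x < b"
    obtain d where "d > 0" and d: "\<forall>y. x < y \<and> y < x + d \<longrightarrow>
        \<bar>H (cmod (u y)) - H (cmod (u x))\<bar> \<le> integral {x..y} g"
      using primitive_norm_increment_local[OF wd cu ch hnn e, of x] unfolding H_def g_def by blast
    have "I y - I x = integral {x..y} g" if "x \<le> y" for y
      using Henstock_Kurzweil_Integration.integral_combine[OF \<open>a \<le> x\<close> that gi] that \<open>a \<le> x\<close>
      unfolding I_def by simp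
    then show "\<exists>d>0. \<forall>y. x < y \<and> y < x + d \<and> y \<le> b \<longrightarrow>
        \<bar>H (cmod (u y)) - H (cmod (u x))\<bar> \<le> I y - I x"
      using d \<open>d > 0\<close> by (metis less_imp_le)
  qed
  then show ?thesis unfolding H_def I_def g_def by simp
qed

lemma primitive_norm_increment_le:
  fixes u w :: "real \<Rightarrow> complex" and h :: "real \<Rightarrow> real"
  assumes wd: "weak_deriv_L2 u w" and cu: "continuous_on UNIV u"
    and ch: "continuous_on UNIV h" and hnn: "\<And>s. 0 \<le> h s" and ab: "a \<le> b"
  shows "\<bar>integral {0..cmod (u b)} h - integral {0..cmod (u a)} h\<bar>
          \<le> integral {a..b} (\<lambda>t. h (cmod (u t)) * cmod (w t))"
proof (rule field_le_epsilon)
  define C where "C = integral {a..b} (\<lambda>t. cmod (w t))"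
  have iw: "(\<lambda>t. cmod (w t)) integrable_on {a..b}"
    using weak_deriv_L2_increment_bound(1)[OF wd ab] .
  have C0: "0 \<le> C" unfolding C_def by (rule integral_nonneg[OF iw]) auto
  have ihw: "(\<lambda>t. h (cmod (u t)) * cmod (w t)) integrable_on {a..b}"
    by (intro continuous_mult_integrable_on[OF _ iw] continuous_on_compose2[OF ch]
        continuous_intros continuous_on_subset[OF cu]) auto
  fix e :: real assume e: "0 < e"
  define e' where "e' = e / (C + 1)"
  have e': "0 < e'" "e' * C \<le> e" using e C0 by (auto simp: e'_def field_simps)
  have "integral {a..b} (\<lambda>t. (h (cmod (u t)) + e') * cmod (w t))
      = integral {a..b} (\<lambda>t. h (cmod (u t)) * cmod (w t)) + e' * C"
    unfolding C_def distrib_right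
    by (subst integral_add[OF ihw]) (auto intro: integrable_on_cmult_left[OF iw, simplified])
  then show "\<bar>integral {0..cmod (u b)} h - integral {0..cmod (u a)} h\<bar>
      \<le> integral {a..b} (\<lambda>t. h (cmod (u t)) * cmod (w t)) + e"
    using primitive_norm_increment_le_eps[OF wd cu ch hnn ab e'(1)] e'(2) by linarith
qed

lemma primitive_norm_rise_fall_le:
  fixes u w :: "real \<Rightarrow> complex" and h :: "real \<Rightarrow> real"
  assumes wd: "weak_deriv_L2 u w" and cu: "continuous_on UNIV u"
    and ch: "continuous_on UNIV h" and hnn: "\<And>s. 0 \<le> h s"
    and int: "integrable lborel (\<lambda>t. h (cmod (u t)) * cmod (w t))"
    and ax: "a \<le> x0" and xb: "x0 \<le> b"
  shows "2 * integral {0..cmod (u x0)} h - integral {0..cmod (u a)} h - integral {0..cmod (u b)} h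
          \<le> (LINT t|lborel. h (cmod (u t)) * cmod (w t))"
proof -
  let ?g = "\<lambda>t. h (cmod (u t)) * cmod (w t)"
  have g_nonneg: "0 \<le> ?g t" for t using hnn[of "cmod (u t)"] by simp
  have cg: "continuous_on UNIV (\<lambda>t. h (cmod (u t)))"
    by (intro continuous_intros continuous_on_compose2[OF ch] cu) auto
  have ig: "?g integrable_on {a..b}"
    using ax xb by (intro continuous_mult_integrable_on[OF continuous_on_subset[OF cg]
          weak_deriv_L2_increment_bound(1)[OF wd]]) auto
  have "integral {a..x0} ?g + integral {x0..b} ?g = integral {a..b} ?g"
    by (rule Henstock_Kurzweil_Integration.integral_combine[OF ax xb ig])
  moreover have "integral {0..cmod (u x0)} h - integral {0..cmod (u a)} h \<le> integral {a..x0} ?g"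
    using primitive_norm_increment_le[OF wd cu ch hnn ax] by simp
  moreover have "integral {0..cmod (u x0)} h - integral {0..cmod (u b)} h \<le> integral {x0..b} ?g"
    using primitive_norm_increment_le[OF wd cu ch hnn xb] by (simp add: abs_minus_commute)
  moreover have sg: "set_integrable lborel {a..b} ?g"
    unfolding set_integrable_def by (rule integrable_mult_indicator[OF _ int]) auto
  then have "integral {a..b} ?g = (LINT t:{a..b}|lborel. ?g t)"
    by (simp add: set_borel_integral_eq_integral(2))
  moreover have "(LINT t:{a..b}|lborel. ?g t) \<le> (LINT t|lborel. ?g t)"
    using sg g_nonneg unfolding set_lebesgue_integral_def set_integrable_def
    by (intro integral_mono[OF _ int]) (auto simp: indicator_def)
  ultimately show ?thesis by linarith
qed

lemma twice_primitive_sup_le: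
  fixes u :: "real \<Rightarrow> complex" and h :: "real \<Rightarrow> real"
  assumes H: "H1 u" and wd: "weak_deriv_L2 u w"
    and ch: "continuous_on UNIV h" and hnn: "\<And>s. 0 \<le> h s"
    and int: "integrable lborel (\<lambda>t. h (cmod (u t)) * cmod (w t))"
    and Mb: "\<And>x. cmod (u x) \<le> M" and Msup: "\<And>e. 0 < e \<Longrightarrow> \<exists>x. M - e < cmod (u x)"
  shows "2 * integral {0..M} h \<le> (LINT t|lborel. h (cmod (u t)) * cmod (w t))"
proof -
  define H where "H s = integral {0..s} h" for s
  have cu: "continuous_on UNIV u" using H unfolding H1_def by auto
  have M0: "0 \<le> M" using Mb[of 0] norm_ge_zero order_trans by blast
  have cH: "continuous_on {0..M} H"
    unfolding H_def by (intro indefinite_integral_continuous_1 integrable_continuous_real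
        continuous_on_subset[OF ch]) auto
  have "2 * H M \<le> (LINT t|lborel. h (cmod (u t)) * cmod (w t)) + \<eta>" if \<eta>: "0 < \<eta>" for \<eta>
  proof -
    obtain d1 where d1: "d1 > 0" "\<And>s. s \<in> {0..M} \<Longrightarrow> dist s M < d1 \<Longrightarrow> dist (H s) (H M) < \<eta>/4"
      using cH M0 \<eta> unfolding continuous_on_iff by (metis atLeastAtMost_iff order_refl zero_less_divide_iff zero_less_numeral)
    obtain d2 where d2: "d2 > 0" "\<And>s. s \<in> {0..M} \<Longrightarrow> dist s 0 < d2 \<Longrightarrow> dist (H s) (H 0) < \<eta>/4"
      using cH M0 \<eta> unfolding continuous_on_iff by (metis atLeastAtMost_iff order_refl zero_less_divide_iff zero_less_numeral)
    define d where "d = min d1 d2"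
    have d: "d > 0" using d1 d2 by (simp add: d_def)
    obtain x0 where x0: "M - d < cmod (u x0)" using Msup[OF d] by blast
    obtain a where a: "a < x0" "cmod (u a) < d" using H1_small_value_left[OF H d] by blast
    obtain b where b: "x0 < b" "cmod (u b) < d" using H1_small_value_right[OF H d] by blast
    have "dist (cmod (u x0)) M < d1" using x0 Mb[of x0] by (auto simp: d_def dist_real_def)
    then have "\<bar>H (cmod (u x0)) - H M\<bar> < \<eta>/4"
      using d1(2)[of "cmod (u x0)"] Mb[of x0] by (auto simp: dist_real_def)
    then have "H M - \<eta>/4 < H (cmod (u x0))" by linarith
    moreover have small: "H (cmod (u y)) < \<eta>/4" if "cmod (u y) < d" for y
    proof -
      have "dist (cmod (u y)) 0 < d2" using that by (auto simp: d_def dist_real_def)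
      then have "\<bar>H (cmod (u y)) - H 0\<bar> < \<eta>/4"
        using d2(2)[of "cmod (u y)"] Mb[of y] by (auto simp: dist_real_def)
      then show ?thesis by (simp add: H_def)
    qed
    moreover have "2 * H (cmod (u x0)) - H (cmod (u a)) - H (cmod (u b))
        \<le> (LINT t|lborel. h (cmod (u t)) * cmod (w t))"
      unfolding H_def by (rule primitive_norm_rise_fall_le[OF wd cu ch hnn int]) (use a b in auto)
    ultimately show ?thesis using small[OF a(2)] small[OF b(2)] by linarith
  qed
  then show ?thesis unfolding H_def by (rule field_le_epsilon)
qed

section \<open>The calibration bound\<close>

text \<open>The calibration profile: for \<open>M = max \<phi>\<^sub>\<mu>\<close> it is the first integral of the soliton
  equation, \<open>|\<phi>\<^sub>\<mu>'| = calib p M \<phi>\<^sub>\<mu>\<close>.\<close>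
definition calib :: "real \<Rightarrow> real \<Rightarrow> real \<Rightarrow> real" where
  "calib p M s = sqrt (max 0 ((2/p) * (M powr (p-2) * s\<^sup>2 - \<bar>s\<bar> powr p)))"

lemma continuous_on_calib: "0 < p \<Longrightarrow> continuous_on UNIV (calib p M)"
  unfolding calib_def by (intro continuous_intros continuous_on_powr') auto

lemma calib_nonneg: "0 \<le> calib p M s"
  unfolding calib_def by simp

lemma powr_eq_powr_minus_2_mult_sq:
  fixes s p :: real shows "0 \<le> s \<Longrightarrow> s powr p = s powr (p-2) * s\<^sup>2"
proof (cases "s = 0")
  case False
  moreover assume "0 \<le> s"
  ultimately have "s powr p = s powr (p - 2 + 2)" by simp
  also have "\<dots> = s powr (p-2) * s powr 2" by (simp only: powr_add)
  finally show ?thesis using \<open>s \<noteq> 0\<close> \<open>0 \<le> s\<close> by (simp add: powr_numeral)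
qed simp

lemma powr_le_powr_minus_2_mult_sq:
  fixes s p M :: real shows "2 < p \<Longrightarrow> 0 \<le> s \<Longrightarrow> s \<le> M \<Longrightarrow> s powr p \<le> M powr (p-2) * s\<^sup>2"
  using powr_eq_powr_minus_2_mult_sq[of s p] powr_mono2[of "p-2" s M]
  by (simp add: mult_right_mono)

lemma calib_sq:
  assumes "2 < p" "0 \<le> s" "s \<le> M"
  shows "(calib p M s)\<^sup>2 = (2/p) * (M powr (p-2) * s\<^sup>2 - s powr p)"
  using powr_le_powr_minus_2_mult_sq[OF assms] assms unfolding calib_def by simp

lemma calib_le_linear:
  assumes "2 < p" "0 \<le> s" "s \<le> M"
  shows "calib p M s \<le> sqrt ((2/p) * M powr (p-2)) * s"
proof -
  have "0 \<le> (2/p) * s powr p" using assms(1) by simp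
  then have "(calib p M s)\<^sup>2 \<le> (2/p) * M powr (p-2) * s\<^sup>2"
    using calib_sq[OF assms] by (simp add: algebra_simps)
  then have "calib p M s \<le> sqrt ((2/p) * M powr (p-2) * s\<^sup>2)"
    by (simp add: real_le_rsqrt)
  also have "\<dots> = sqrt ((2/p) * M powr (p-2)) * sqrt (s\<^sup>2)"
    by (simp only: real_sqrt_mult)
  also have "\<dots> = sqrt ((2/p) * M powr (p-2)) * s"
    using assms by simp
  finally show ?thesis .
qed

lemma calib_scale:
  assumes p: "2 < p" and M: "0 < M"
  shows "calib p M (M * s) = M powr (p/2) * calib p 1 s"
proof -
  have "M powr (p-2) * (M * s)\<^sup>2 = M powr p * s\<^sup>2"
    using powr_eq_powr_minus_2_mult_sq[of M p] M by (simp add: power_mult_distrib)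
  moreover have "\<bar>M * s\<bar> powr p = M powr p * \<bar>s\<bar> powr p"
    using M by (simp add: abs_mult powr_mult)
  ultimately have "(2/p) * (M powr (p-2) * (M * s)\<^sup>2 - \<bar>M * s\<bar> powr p)
      = M powr p * ((2/p) * (s\<^sup>2 - \<bar>s\<bar> powr p))"
    by (simp add: algebra_simps)
  then have "max 0 ((2/p) * (M powr (p-2) * (M * s)\<^sup>2 - \<bar>M * s\<bar> powr p))
      = M powr p * max 0 ((2/p) * (s\<^sup>2 - \<bar>s\<bar> powr p))"
    by (simp only:) (simp add: max_mult_distrib_left)
  then show ?thesis
    unfolding calib_def using M by (simp add: real_sqrt_mult powr_half_sqrt_powr)
qed

lemma integral_calib_scale:
  assumes p: "2 < p" and M: "0 < M"
  shows "integral {0..M} (calib p M) = M powr ((p+2)/2) * integral {0..1} (calib p 1)"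
proof -
  have "(\<lambda>x. x / M) ` {0..M} = {0..1}"
  proof
    show "(\<lambda>x. x / M) ` {0..M} \<subseteq> {0..1}" using M by auto
    show "{0..1} \<subseteq> (\<lambda>x. x / M) ` {0..M}"
    proof
      fix y :: real assume "y \<in> {0..1}"
      then have "y = (M * y) / M" "M * y \<in> {0..M}" using M by (auto simp: mult_le_cancel_left1)
      then show "y \<in> (\<lambda>x. x / M) ` {0..M}" by blast
    qed
  qed
  then have stretch: "integral {0..1} (\<lambda>x. calib p M (M * x)) = (1 / M) * integral {0..M} (calib p M)"
    using integral_stretch_real[of M 0 M "calib p M"] M by simp
  have scale: "integral {0..1} (\<lambda>x. calib p M (M * x)) = M powr (p/2) * integral {0..1} (calib p 1)"
    using calib_scale[OF p M] by simp
  have pow: "M * M powr (p/2) = M powr ((p+2)/2)"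
  proof -
    have "M * M powr (p/2) = M powr 1 * M powr (p/2)" using M by simp
    also have "\<dots> = M powr (1 + p/2)" by (simp add: powr_add)
    also have "1 + p/2 = (p+2)/2" by simp
    finally show ?thesis .
  qed
  from stretch scale have "integral {0..M} (calib p M) = M * M powr (p/2) * integral {0..1} (calib p 1)"
    using M by (simp add: field_simps)
  then show ?thesis unfolding pow .
qed

lemma calib_comp_integrable:
  assumes p: "2 < p" and H: "H1 u" and Mb: "\<And>x. cmod (u x) \<le> M"
  shows "integrable lborel (\<lambda>x. cmod (u x) powr p)"
    and "integrable lborel (\<lambda>x. (calib p M (cmod (u x)))\<^sup>2)"
    and "integrable lborel (\<lambda>x. calib p M (cmod (u x)) * cmod (dH1 u x))"
proof -
  let ?h = "\<lambda>x. calib p M (cmod (u x))" and ?w = "\<lambda>x. cmod (dH1 u x)"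
  have [measurable]: "u \<in> borel_measurable borel"
    using H unfolding H1_def by (simp add: borel_measurable_continuous_onI)
  have [measurable]: "dH1 u \<in> borel_measurable borel"
    using weak_deriv_L2_dH1[OF H] unfolding weak_deriv_L2_def by simp
  have [measurable]: "calib p M \<in> borel_measurable borel"
    using continuous_on_calib p by (intro borel_measurable_continuous_onI) auto
  have iu: "integrable lborel (\<lambda>x. (cmod (u x))\<^sup>2)" using H unfolding H1_def by auto
  have iw: "integrable lborel (\<lambda>x. (?w x)\<^sup>2)"
    using weak_deriv_L2_dH1[OF H] unfolding weak_deriv_L2_def by auto
  show ip: "integrable lborel (\<lambda>x. cmod (u x) powr p)"
  proof (rule Bochner_Integration.integrable_bound)
    show "integrable lborel (\<lambda>x. M powr (p-2) * (cmod (u x))\<^sup>2)" using iu by simp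
    show "(\<lambda>x. cmod (u x) powr p) \<in> borel_measurable lborel" by measurable
    show "AE x in lborel. norm (cmod (u x) powr p) \<le> norm (M powr (p-2) * (cmod (u x))\<^sup>2)"
      using powr_le_powr_minus_2_mult_sq[OF p _ Mb] by (auto intro!: AE_I2)
  qed
  have "(?h x)\<^sup>2 = (2/p) * (M powr (p-2) * (cmod (u x))\<^sup>2) - (2/p) * cmod (u x) powr p" for x
    using calib_sq[OF p _ Mb[of x]] by (simp add: algebra_simps)
  then show ih: "integrable lborel (\<lambda>x. (?h x)\<^sup>2)"
    using iu ip by simp
  show "integrable lborel (\<lambda>x. ?h x * ?w x)"
  proof (rule Bochner_Integration.integrable_bound)
    show "integrable lborel (\<lambda>x. (?h x)\<^sup>2 / 2 + (?w x)\<^sup>2 / 2)"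
      using ih iw by simp
    show "(\<lambda>x. ?h x * ?w x) \<in> borel_measurable lborel" by measurable
    have "?h x * ?w x \<le> (?h x)\<^sup>2 / 2 + (?w x)\<^sup>2 / 2" for x
      using sum_squares_bound[of "?h x" "?w x"] by (simp add: field_simps)
    then show "AE x in lborel. norm (?h x * ?w x) \<le> norm ((?h x)\<^sup>2 / 2 + (?w x)\<^sup>2 / 2)"
      by (intro AE_I2) (simp add: calib_nonneg)
  qed
qed

lemma E0_ge_calibration:
  fixes p M :: real and u :: "real \<Rightarrow> complex"
  assumes p: "2 < p" and H: "H1 u" and Mb: "\<And>x. cmod (u x) \<le> M"
    and Msup: "\<And>e. 0 < e \<Longrightarrow> \<exists>x. M - e < cmod (u x)"
  shows "integrable lborel (\<lambda>x. (cmod (dH1 u x) - calib p M (cmod (u x)))\<^sup>2)"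
    and "2 * integral {0..M} (calib p M) - (1/p) * (M powr (p-2) * mass u)
          + (1/2) * (LINT x|lborel. (cmod (dH1 u x) - calib p M (cmod (u x)))\<^sup>2) \<le> E0 p u"
proof -
  let ?w = "\<lambda>x. cmod (dH1 u x)" and ?h = "\<lambda>x. calib p M (cmod (u x))"
  have iu: "integrable lborel (\<lambda>x. (cmod (u x))\<^sup>2)" using H unfolding H1_def by auto
  have iw: "integrable lborel (\<lambda>x. (?w x)\<^sup>2)"
    using weak_deriv_L2_dH1[OF H] unfolding weak_deriv_L2_def by auto
  note ip = calib_comp_integrable(1)[OF p H Mb] and ih = calib_comp_integrable(2)[OF p H Mb]
    and ihw = calib_comp_integrable(3)[OF p H Mb]
  have square: "(?w x - ?h x)\<^sup>2 = (?w x)\<^sup>2 - 2 * (?h x * ?w x) + (?h x)\<^sup>2" for x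
    by (simp add: power2_diff algebra_simps)
  show "integrable lborel (\<lambda>x. (?w x - ?h x)\<^sup>2)"
    unfolding square using iw ihw ih by simp
  define W where "W = (LINT x|lborel. (?w x)\<^sup>2)"
  define A where "A = (LINT x|lborel. ?h x * ?w x)"
  define S where "S = (LINT x|lborel. (?h x)\<^sup>2)"
  define P where "P = (LINT x|lborel. cmod (u x) powr p)"
  define q where "q = 1 / p"
  have "(LINT x|lborel. (?w x - ?h x)\<^sup>2) = W - 2 * A + S"
    unfolding square W_def A_def S_def using iw ihw ih by simp
  moreover have "(?h x)\<^sup>2 = 2 * (q * (M powr (p-2) * (cmod (u x))\<^sup>2)) - 2 * (q * cmod (u x) powr p)" for x
    using calib_sq[OF p _ Mb[of x]] by (simp add: q_def algebra_simps)
  then have "S = 2 * (q * (M powr (p-2) * mass u)) - 2 * (q * P)"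
    unfolding S_def P_def using iu ip by (simp add: mass_def)
  moreover have "2 * integral {0..M} (calib p M) \<le> A"
    unfolding A_def using p
    by (intro twice_primitive_sup_le[OF H weak_deriv_L2_dH1[OF H] _ calib_nonneg ihw Mb Msup]
        continuous_on_calib) simp
  moreover have "E0 p u = W / 2 - q * P" unfolding E0_def W_def P_def q_def by simp
  ultimately show "2 * integral {0..M} (calib p M) - (1/p) * (M powr (p-2) * mass u)
      + (1/2) * (LINT x|lborel. (?w x - ?h x)\<^sup>2) \<le> E0 p u"
    unfolding q_def[symmetric] by linarith
qed

section \<open>The soliton\<close>

locale soliton =
  fixes p \<mu> :: real
  assumes p_gt_2: "2 < p" and p_lt_6: "p < 6" and mu_pos: "0 < \<mu>"
begin

abbreviation \<Phi> :: "real \<Rightarrow> complex" where "\<Phi> \<equiv> \<lambda>x. complex_of_real (phi p \<mu> x)"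

definition "\<alpha> = 2 / (p - 2)"
definition "\<omega> = omega p \<mu>"
definition "\<kappa> = (p - 2) / 2 * sqrt \<omega>"
definition "A = \<omega> powr (1 / (p - 2)) * (p / 2) powr (1 / (p - 2))"
definition "dphi x = - (\<alpha> * \<kappa> * A) * (cosh (\<kappa> * x) powr (- \<alpha> - 1) * sinh (\<kappa> * x))"
definition "J = (LINT x|lborel. cosh (\<kappa> * x) powr (- (2 * \<alpha>)))"
definition "\<theta> = \<omega> * \<mu> / (p + 2)"

lemma p_nonzero: "p \<noteq> 0" "p - 2 \<noteq> 0" "p + 2 \<noteq> 0"
  using p_gt_2 by auto

lemma alpha_pos: "0 < \<alpha>" using p_gt_2 by (simp add: \<alpha>_def)
lemma two_alpha_ge_1: "1 \<le> 2 * \<alpha>" using p_gt_2 p_lt_6 by (simp add: \<alpha>_def field_simps)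

lemma Qp_closed_form: "Qp p x = (p/2) powr (1/(p-2)) * cosh ((p-2)/2 * x) powr (-\<alpha>)"
  unfolding Qp_def \<alpha>_def sech_def by (simp add: powr_divide powr_minus_divide)

lemma Qp_sq: "(Qp p x)\<^sup>2 = (p/2) powr (2/(p-2)) * cosh ((p-2)/2 * x) powr (- (2 * \<alpha>))"
proof -
  have "(Qp p x)\<^sup>2 = ((p/2) powr (1/(p-2)))\<^sup>2 * (cosh ((p-2)/2 * x) powr (-\<alpha>))\<^sup>2"
    unfolding Qp_closed_form by (simp add: power_mult_distrib)
  also have "((p/2) powr (1/(p-2)))\<^sup>2 = (p/2) powr (2/(p-2))"
    using p_gt_2 by (simp add: power2_eq_square powr_add[symmetric])
  also have "(cosh ((p-2)/2 * x) powr (-\<alpha>))\<^sup>2 = cosh ((p-2)/2 * x) powr (- (2 * \<alpha>))"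
    by (simp add: power2_eq_square powr_add[symmetric])
  finally show ?thesis .
qed

lemma M1_pos: "0 < M1 p"
  unfolding M1_def
proof (rule integral_pos_of_continuous_pos_at[where a = 0])
  show "integrable lborel (\<lambda>x. (Qp p x)\<^sup>2)"
    unfolding Qp_sq using integrable_cosh_powr_neg[of "(p-2)/2" "2*\<alpha>"] p_gt_2 two_alpha_ge_1 by simp
  show "isCont (\<lambda>x. (Qp p x)\<^sup>2) 0"
    unfolding Qp_sq by (intro continuous_intros) auto
qed (use p_gt_2 in \<open>simp_all add: Qp_sq\<close>)

lemma omega_pos: "0 < \<omega>"
  unfolding \<omega>_def omega_def using M1_pos mu_pos by simp

lemma kappa_pos: "0 < \<kappa>"
  unfolding \<kappa>_def using p_gt_2 omega_pos by simp

lemma A_pos: "0 < A"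
  unfolding A_def using p_gt_2 omega_pos by simp

lemma A_powr: "A powr (p - 2) = \<omega> * p / 2"
proof -
  have "A = (\<omega> * (p/2)) powr (1/(p-2))"
    unfolding A_def using powr_mult[of \<omega> "p/2" "1/(p-2)"] omega_pos p_gt_2 by simp
  then show ?thesis using p_gt_2 omega_pos by (simp add: powr_powr)
qed

lemma alpha_kappa: "\<alpha> * \<kappa> = sqrt \<omega>"
  unfolding \<alpha>_def \<kappa>_def using p_gt_2 by (simp add: field_simps)

lemma phi_closed_form: "phi p \<mu> x = A * cosh (\<kappa> * x) powr (- \<alpha>)"
proof -
  have "(p-2)/2 * (sqrt (omega p \<mu>) * x) = \<kappa> * x" unfolding \<kappa>_def \<omega>_def by simp
  then show ?thesis
    by (simp only: phi_def Qp_closed_form A_def \<omega>_def mult.assoc)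
qed

lemma phi_fun: "phi p \<mu> = (\<lambda>x. A * cosh (\<kappa> * x) powr (- \<alpha>))"
  using phi_closed_form by blast

lemma phi_has_derivative: "(phi p \<mu> has_real_derivative dphi x) (at x)"
  unfolding phi_fun dphi_def by (rule derivative_eq_intros refl | simp)+

lemma continuous_dphi: "continuous_on UNIV dphi"
  unfolding dphi_def by (intro continuous_intros) auto

lemma continuous_phi: "continuous_on UNIV (phi p \<mu>)"
  unfolding phi_fun by (intro continuous_intros) auto

lemma phi_pos: "0 < phi p \<mu> x"
  unfolding phi_closed_form using A_pos by simp

lemma phi_0: "phi p \<mu> 0 = A"
  unfolding phi_closed_form by simp

lemma phi_le_A: "phi p \<mu> x \<le> A"
proof -
  have "cosh (\<kappa> * x) powr (-\<alpha>) \<le> cosh (\<kappa> * x) powr 0"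
    using alpha_pos by (intro powr_mono) (auto simp: cosh_real_ge_1)
  then show ?thesis unfolding phi_closed_form using A_pos by (simp add: mult_left_le)
qed

lemma phi_lt_A: "x \<noteq> 0 \<Longrightarrow> phi p \<mu> x < A"
proof -
  assume x: "x \<noteq> 0"
  have "cosh 0 < cosh (\<kappa> * x)"
  proof (cases "0 < x")
    case True
    then show ?thesis using kappa_pos by (subst cosh_real_nonneg_less_iff) auto
  next
    case False
    then have "\<kappa> * x < 0" using x kappa_pos by (simp add: mult_pos_neg)
    then show ?thesis by (subst cosh_real_nonpos_less_iff) auto
  qed
  then have "cosh (\<kappa> * x) powr (-\<alpha>) < cosh (\<kappa> * x) powr 0"
    using alpha_pos by (intro powr_less_mono) auto
  then show ?thesis unfolding phi_closed_form using A_pos by simp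
qed

lemma phi_tendsto_0: "(phi p \<mu> \<longlongrightarrow> 0) at_top" "(phi p \<mu> \<longlongrightarrow> 0) at_bot"
  unfolding phi_fun using kappa_pos alpha_pos by real_asymp+

lemma phi_sq: "(phi p \<mu> x)\<^sup>2 = A\<^sup>2 * cosh (\<kappa> * x) powr (- (2 * \<alpha>))"
  unfolding phi_closed_form by (simp add: power_mult_distrib power2_eq_square powr_add[symmetric])

lemma phi_powr_p: "phi p \<mu> x powr p = A\<^sup>2 * (\<omega> * p / 2) * cosh (\<kappa> * x) powr (- (2 * \<alpha> + 2))"
proof -
  have "phi p \<mu> x powr p = A powr p * cosh (\<kappa> * x) powr (-\<alpha> * p)"
    unfolding phi_closed_form using A_pos by (simp add: powr_mult powr_powr)
  also have "-\<alpha> * p = - (2 * \<alpha> + 2)" using p_gt_2 by (simp add: \<alpha>_def field_simps)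
  also have "A powr p = A\<^sup>2 * (\<omega> * p / 2)"
    using powr_eq_powr_minus_2_mult_sq[of A p] A_pos A_powr by simp
  finally show ?thesis .
qed

lemma dphi_sq:
  "(dphi x)\<^sup>2 = \<omega> * A\<^sup>2 * (cosh (\<kappa> * x) powr (- (2 * \<alpha>)) - cosh (\<kappa> * x) powr (- (2 * \<alpha> + 2)))"
proof -
  let ?c = "cosh (\<kappa> * x)"
  have sq: "?c powr 2 = ?c\<^sup>2" by (simp add: powr_numeral)
  have exponent: "- (2 * \<alpha> + 2) + 2 = - (2 * \<alpha>)" by simp
  have "?c powr (- (2 * \<alpha> + 2)) * ?c powr 2 = ?c powr (- (2 * \<alpha> + 2) + 2)" by (rule powr_add[symmetric])
  then have c2: "?c powr (- (2 * \<alpha> + 2)) * ?c\<^sup>2 = ?c powr (- (2 * \<alpha>))" unfolding sq exponent .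
  have "(?c powr (-\<alpha> - 1))\<^sup>2 = ?c powr (- (2 * \<alpha> + 2))"
    by (simp add: power2_eq_square powr_add[symmetric])
  then have "(dphi x)\<^sup>2 = (\<alpha> * \<kappa>)\<^sup>2 * A\<^sup>2 * (?c powr (- (2 * \<alpha> + 2)) * (sinh (\<kappa> * x))\<^sup>2)"
    unfolding dphi_def by (simp add: power_mult_distrib algebra_simps)
  also have "\<dots> = \<omega> * A\<^sup>2 * (?c powr (- (2 * \<alpha> + 2)) * ?c\<^sup>2 - ?c powr (- (2 * \<alpha> + 2)))"
    using cosh_square_eq[of "\<kappa> * x"] omega_pos unfolding alpha_kappa by (simp add: algebra_simps)
  finally show ?thesis unfolding c2 .
qed

lemma calib_phi: "calib p A (phi p \<mu> x) = \<bar>dphi x\<bar>"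
proof -
  have "(calib p A (phi p \<mu> x))\<^sup>2 = (2/p) * (A powr (p-2) * (phi p \<mu> x)\<^sup>2 - phi p \<mu> x powr p)"
    by (rule calib_sq[OF p_gt_2 less_imp_le[OF phi_pos] phi_le_A])
  also have "\<dots> = (dphi x)\<^sup>2"
    unfolding A_powr phi_sq phi_powr_p dphi_sq using p_gt_2 by (simp add: field_simps)
  finally show ?thesis by (metis abs_ge_zero calib_nonneg power2_eq_iff_nonneg power2_abs)
qed

lemma dphi_nonpos: "0 \<le> x \<Longrightarrow> dphi x \<le> 0"
  unfolding dphi_def using alpha_pos kappa_pos A_pos
  by (intro mult_nonpos_nonneg mult_nonneg_nonneg) (auto simp: zero_le_mult_iff)

lemma dphi_nonneg: "x \<le> 0 \<Longrightarrow> 0 \<le> dphi x"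
proof -
  assume "x \<le> 0"
  then have "sinh (\<kappa> * x) \<le> 0" using kappa_pos by (simp add: mult_nonneg_nonpos)
  then show ?thesis unfolding dphi_def using alpha_pos kappa_pos A_pos
    by (simp add: mult_nonpos_nonpos mult_nonneg_nonpos)
qed

lemma integrable_cosh_powers:
  "integrable lborel (\<lambda>x. cosh (\<kappa> * x) powr (- (2 * \<alpha>)))"
  "integrable lborel (\<lambda>x. cosh (\<kappa> * x) powr (- (2 * \<alpha> + 2)))"
  using integrable_cosh_powr_neg[OF kappa_pos, of "2 * \<alpha>"]
    integrable_cosh_powr_neg[OF kappa_pos, of "2 * \<alpha> + 2"] two_alpha_ge_1 by auto

lemma integrable_phi_sq: "integrable lborel (\<lambda>x. (phi p \<mu> x)\<^sup>2)"
  unfolding phi_sq using integrable_cosh_powers by simp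

lemma integrable_dphi_sq: "integrable lborel (\<lambda>x. (dphi x)\<^sup>2)"
  unfolding dphi_sq using integrable_cosh_powers by simp

lemma H1_phi: "H1 \<Phi>"
  and integral_dH1_phi: "(LINT x|lborel. (cmod (dH1 \<Phi> x))\<^sup>2) = (LINT x|lborel. (dphi x)\<^sup>2)"
  using H1_of_real_C1[OF phi_has_derivative continuous_dphi integrable_phi_sq integrable_dphi_sq]
  by auto

lemma mass_phi: "mass \<Phi> = \<mu>"
proof -
  have sw: "0 < sqrt \<omega>" using omega_pos by simp
  have "(phi p \<mu> x)\<^sup>2 = \<omega> powr (2/(p-2)) * (Qp p (sqrt \<omega> * x))\<^sup>2" for x
  proof -
    have "(\<omega> powr (1/(p-2)))\<^sup>2 = \<omega> powr (2/(p-2))"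
      by (simp add: power2_eq_square powr_add[symmetric])
    then show ?thesis unfolding phi_def \<omega>_def[symmetric] by (simp add: power_mult_distrib)
  qed
  moreover have "M1 p = sqrt \<omega> * (LINT x|lborel. (Qp p (sqrt \<omega> * x))\<^sup>2)"
    using lborel_integral_real_affine[of "sqrt \<omega>" "\<lambda>x. (Qp p x)\<^sup>2" 0] sw unfolding M1_def by simp
  ultimately have "mass \<Phi> = \<omega> powr (2/(p-2)) * (M1 p / sqrt \<omega>)"
    unfolding mass_def using sw by simp
  also have "\<dots> = \<omega> powr (2/(p-2) - 1/2) * M1 p"
    using omega_pos by (simp add: powr_diff powr_half_sqrt[symmetric])
  also have "\<omega> powr (2/(p-2) - 1/2) = \<mu> / M1 p"
  proof -
    have "\<omega> powr (2/(p-2) - 1/2) = (\<mu> / M1 p) powr (2*(p-2)/(6-p) * (2/(p-2) - 1/2))"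
      unfolding \<omega>_def omega_def by (simp add: powr_powr)
    also have "2*(p-2)/(6-p) * (2/(p-2) - 1/2) = 1"
    proof -
      have "2/(p-2) - 1/2 = (6-p) / (2*(p-2))" using p_gt_2 by (simp add: field_simps)
      then show ?thesis using p_gt_2 p_lt_6 by simp
    qed
    finally show ?thesis using mu_pos M1_pos by simp
  qed
  finally show ?thesis using M1_pos by simp
qed

lemma A_sq_J: "A\<^sup>2 * J = \<mu>"
proof -
  have "(LINT x|lborel. (phi p \<mu> x)\<^sup>2) = \<mu>" using mass_phi by (simp add: mass_def)
  then show ?thesis unfolding phi_sq J_def by simp
qed

lemma cosh_powers_integral:
  "(LINT x|lborel. cosh (\<kappa> * x) powr (- (2 * \<alpha> + 2))) = 4 * J / (p + 2)"
proof -
  let ?L = "LINT x|lborel. cosh (\<kappa> * x) powr (- (2 * \<alpha> + 2))"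
  have "(p - 2) * ((2 * \<alpha> + 1) * ?L) = (p - 2) * (2 * \<alpha> * J)"
    unfolding J_def using cosh_powr_integral_recursion[OF kappa_pos two_alpha_ge_1] by simp
  moreover have "(p - 2) * (2 * \<alpha> + 1) = p + 2" "(p - 2) * (2 * \<alpha>) = 4"
    using p_nonzero by (simp_all add: \<alpha>_def field_simps)
  ultimately have "(p + 2) * ?L = 4 * J" by (simp only: mult.assoc[symmetric])
  then show ?thesis using p_nonzero by (simp add: field_simps)
qed

lemma integral_dphi_sq: "(LINT x|lborel. (dphi x)\<^sup>2) = (p - 2) * \<theta>"
proof -
  have "(LINT x|lborel. (dphi x)\<^sup>2) = \<omega> * A\<^sup>2 * (J - 4 * J / (p + 2))"
    unfolding dphi_sq J_def[symmetric] cosh_powers_integral[symmetric]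
    using integrable_cosh_powers by (simp add: J_def)
  also have "\<dots> = (p - 2) * (\<omega> * (A\<^sup>2 * J) / (p + 2))"
    using p_nonzero by (simp add: field_simps)
  finally show ?thesis unfolding A_sq_J \<theta>_def .
qed

lemma integral_phi_powr_p: "(LINT x|lborel. phi p \<mu> x powr p) = 2 * p * \<theta>"
proof -
  have "(LINT x|lborel. phi p \<mu> x powr p) = A\<^sup>2 * (\<omega> * p / 2) * (4 * J / (p + 2))"
    unfolding phi_powr_p cosh_powers_integral[symmetric] by simp
  also have "\<dots> = 2 * p * (\<omega> * (A\<^sup>2 * J) / (p + 2))"
    using p_nonzero by (simp add: field_simps)
  finally show ?thesis unfolding A_sq_J \<theta>_def .
qed

lemma E0_phi: "E0 p \<Phi> = (p - 6) / 2 * \<theta>"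
proof -
  have "(LINT x|lborel. cmod (\<Phi> x) powr p) = 2 * p * \<theta>"
    using phi_pos integral_phi_powr_p by (simp add: less_imp_le)
  then have "E0 p \<Phi> = (1/2) * ((p - 2) * \<theta>) - (1/p) * (2 * p * \<theta>)"
    unfolding E0_def integral_dH1_phi integral_dphi_sq by simp
  also have "\<dots> = (p - 6) / 2 * \<theta>"
    using p_nonzero by (simp add: field_simps)
  finally show ?thesis .
qed

end

section \<open>Minimality of the soliton\<close>

context soliton
begin

abbreviation calib_primitive :: "real \<Rightarrow> real" where
  "calib_primitive s \<equiv> integral {0..s} (calib p A)"

lemma continuous_on_calib_primitive: "continuous_on {0..A} calib_primitive"
  by (intro indefinite_integral_continuous_1 integrable_continuous_real
      continuous_on_subset[OF continuous_on_calib]) (use p_gt_2 in auto)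

lemma continuous_on_calib_primitive_phi: "continuous_on UNIV (\<lambda>x. calib_primitive (phi p \<mu> x))"
  by (rule continuous_on_compose2[OF continuous_on_calib_primitive continuous_phi])
     (use phi_pos phi_le_A in \<open>auto simp: less_imp_le\<close>)

lemma calib_primitive_phi_tendsto_0:
  assumes "(phi p \<mu> \<longlongrightarrow> 0) F"
  shows "((\<lambda>x. calib_primitive (phi p \<mu> x)) \<longlongrightarrow> 0) F"
proof -
  have "((\<lambda>x. calib_primitive (phi p \<mu> x)) \<longlongrightarrow> calib_primitive 0) F"
    by (rule continuous_on_tendsto_compose[OF continuous_on_calib_primitive assms])
       (use A_pos phi_pos phi_le_A in \<open>auto simp: less_imp_le\<close>)
  then show ?thesis by simp
qed

lemma calib_primitive_phi_has_derivative:
  assumes "x \<noteq> 0"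
  shows "((\<lambda>x. calib_primitive (phi p \<mu> x)) has_real_derivative \<bar>dphi x\<bar> * dphi x) (at x)"
proof -
  have "(calib_primitive has_real_derivative calib p A s) (at s)" if "0 < s" "s < A" for s
  proof -
    have "(calib_primitive has_real_derivative calib p A s) (at s within {0..A})"
      by (rule integral_has_real_derivative[OF continuous_on_subset[OF continuous_on_calib]])
         (use that p_gt_2 in auto)
    then show ?thesis using that by (simp add: at_within_Icc_at)
  qed
  from DERIV_chain2[OF this[OF phi_pos phi_lt_A[OF assms]] phi_has_derivative]
  show ?thesis unfolding calib_phi .
qed

lemma isCont_dphi_sq: "isCont (\<lambda>x. (dphi x)\<^sup>2) x"
  using continuous_dphi by (intro continuous_intros) (simp add: continuous_on_eq_continuous_at)

lemma isCont_calib_primitive_phi_0: "isCont (\<lambda>x. calib_primitive (phi p \<mu> x)) 0"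
  using continuous_on_calib_primitive_phi by (simp add: continuous_on_eq_continuous_at)

lemma integral_dphi_sq_right_half: "(LBINT x=0..\<infinity>. (dphi x)\<^sup>2) = calib_primitive A"
proof -
  have "(LBINT x=0..\<infinity>. (dphi x)\<^sup>2) = 0 - (- calib_primitive A)"
  proof (rule interval_integral_FTC_nonneg(2))
    fix x assume "0 < ereal x" "ereal x < \<infinity>"
    then have "0 < x" by simp
    then show "((\<lambda>x. - calib_primitive (phi p \<mu> x)) has_real_derivative (dphi x)\<^sup>2) (at x)"
      using DERIV_minus[OF calib_primitive_phi_has_derivative, of x] dphi_nonpos[of x]
      by (simp add: power2_eq_square)
  next
    have "((\<lambda>x. - calib_primitive (phi p \<mu> x)) \<longlongrightarrow> - calib_primitive A) (at_right 0)"
      using isContD[OF isCont_calib_primitive_phi_0]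
      by (intro tendsto_minus) (simp add: filterlim_at_split phi_0)
    then show "(((\<lambda>x. - calib_primitive (phi p \<mu> x)) \<circ> real_of_ereal) \<longlongrightarrow> - calib_primitive A) (at_right 0)"
      unfolding zero_ereal_def ereal_tendsto_simps .
    show "(((\<lambda>x. - calib_primitive (phi p \<mu> x)) \<circ> real_of_ereal) \<longlongrightarrow> 0) (at_left \<infinity>)"
      unfolding ereal_tendsto_simps
      using tendsto_minus[OF calib_primitive_phi_tendsto_0[OF phi_tendsto_0(1)]] by simp
  qed (auto intro: isCont_dphi_sq)
  then show ?thesis by simp
qed

lemma integral_dphi_sq_left_half: "(LBINT x=-\<infinity>..0. (dphi x)\<^sup>2) = calib_primitive A"
proof -
  have "(LBINT x=-\<infinity>..0. (dphi x)\<^sup>2) = calib_primitive A - 0"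
  proof (rule interval_integral_FTC_nonneg(2))
    fix x assume "-\<infinity> < ereal x" "ereal x < 0"
    then have "x < 0" by simp
    then show "((\<lambda>x. calib_primitive (phi p \<mu> x)) has_real_derivative (dphi x)\<^sup>2) (at x)"
      using calib_primitive_phi_has_derivative[of x] dphi_nonneg[of x]
      by (simp add: power2_eq_square)
  next
    have "((\<lambda>x. calib_primitive (phi p \<mu> x)) \<longlongrightarrow> calib_primitive A) (at_left 0)"
      using isContD[OF isCont_calib_primitive_phi_0] by (simp add: filterlim_at_split phi_0)
    then show "(((\<lambda>x. calib_primitive (phi p \<mu> x)) \<circ> real_of_ereal) \<longlongrightarrow> calib_primitive A) (at_left 0)"
      unfolding zero_ereal_def ereal_tendsto_simps .
    show "(((\<lambda>x. calib_primitive (phi p \<mu> x)) \<circ> real_of_ereal) \<longlongrightarrow> 0) (at_right (-\<infinity>))"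
      unfolding ereal_tendsto_simps using calib_primitive_phi_tendsto_0[OF phi_tendsto_0(2)] by simp
  qed (auto intro: isCont_dphi_sq)
  then show ?thesis by simp
qed

text \<open>Equality in the calibration bound for the soliton, since \<open>|\<phi>\<^sub>\<mu>'| = calib p A \<phi>\<^sub>\<mu>\<close>
  and \<open>\<phi>\<^sub>\<mu>\<close> is monotone on each half-line.\<close>
lemma twice_calib_primitive_A: "2 * calib_primitive A = (p - 2) * \<theta>"
proof -
  have "(LBINT x=-\<infinity>..0. (dphi x)\<^sup>2) + (LBINT x=0..\<infinity>. (dphi x)\<^sup>2) = (LBINT x=-\<infinity>..\<infinity>. (dphi x)\<^sup>2)"
    by (rule interval_integral_sum)
       (use integrable_dphi_sq in \<open>simp add: interval_lebesgue_integrable_def set_integrable_def\<close>)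
  also have "\<dots> = (LINT x|lborel. (dphi x)\<^sup>2)"
    by (simp add: interval_lebesgue_integral_def set_lebesgue_integral_def)
  finally show ?thesis using integral_dphi_sq_left_half integral_dphi_sq_right_half integral_dphi_sq
    by simp
qed

lemma E0_phi_le_calib_bound:
  assumes M: "0 < M"
  shows "E0 p \<Phi> \<le> 2 * integral {0..M} (calib p M) - (1/p) * (M powr (p - 2) * \<mu>)"
proof -
  define t where "t = M / A"
  have t: "0 < t" and Mt: "M = t * A" unfolding t_def using M A_pos by auto
  define a b where "a = t powr ((p + 2) / 2)" and "b = t powr (p - 2)"
  have theta: "0 \<le> \<theta>" unfolding \<theta>_def using omega_pos mu_pos p_gt_2 by simp
  have "M powr ((p+2)/2) = a * A powr ((p+2)/2)"
    unfolding Mt a_def using t A_pos by (simp add: powr_mult)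
  then have "integral {0..M} (calib p M) = a * (A powr ((p+2)/2) * integral {0..1} (calib p 1))"
    unfolding integral_calib_scale[OF p_gt_2 M] by simp
  also have "A powr ((p+2)/2) * integral {0..1} (calib p 1) = calib_primitive A"
    by (rule integral_calib_scale[OF p_gt_2 A_pos, symmetric])
  finally have I: "2 * integral {0..M} (calib p M) = a * ((p - 2) * \<theta>)"
    using twice_calib_primitive_A by simp
  have "M powr (p - 2) = b * (\<omega> * p / 2)"
    unfolding Mt b_def using t A_pos A_powr by (simp add: powr_mult)
  then have P: "(1/p) * (M powr (p - 2) * \<mu>) = b * ((p + 2) / 2 * \<theta>)"
    unfolding \<theta>_def using p_nonzero by (simp add: field_simps)
  have "(p - 6) / 2 * \<theta> \<le> (2 * (p - 2) * a - (p + 2) * b) / 2 * \<theta>"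
    using soliton_scaling_inequality[OF p_gt_2 p_lt_6 t] theta unfolding a_def b_def
    by (intro mult_right_mono) auto
  also have "\<dots> = a * ((p - 2) * \<theta>) - b * ((p + 2) / 2 * \<theta>)"
    by (simp add: field_simps)
  finally show ?thesis unfolding E0_phi I P .
qed

lemma E0_lower_bound:
  assumes H: "H1 u" and m: "mass u = \<mu>"
  shows "\<exists>M>0. (\<forall>x. cmod (u x) \<le> M)
     \<and> integrable lborel (\<lambda>x. (cmod (dH1 u x) - calib p M (cmod (u x)))\<^sup>2)
     \<and> E0 p \<Phi> + (1/2) * (LINT x|lborel. (cmod (dH1 u x) - calib p M (cmod (u x)))\<^sup>2) \<le> E0 p u"
proof -
  obtain C where "\<And>x. cmod (u x) \<le> C" using H1_bounded[OF H] by blast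
  then have bdd: "bdd_above (range (\<lambda>x. cmod (u x)))" by (intro bdd_aboveI[of _ C]) auto
  define M where "M = Sup (range (\<lambda>x. cmod (u x)))"
  have Mb: "\<And>x. cmod (u x) \<le> M" unfolding M_def using bdd by (auto intro: cSup_upper)
  have Msup: "\<exists>x. M - e < cmod (u x)" if "0 < e" for e
  proof -
    have "M - e < M" using that by simp
    then show ?thesis unfolding M_def using bdd by (subst (asm) less_cSup_iff) auto
  qed
  have M0: "0 < M"
  proof (rule ccontr)
    assume "\<not> 0 < M"
    then have "\<And>x. cmod (u x) = 0" using Mb by (meson norm_ge_zero order.trans antisym not_less)
    then have "mass u = 0" unfolding mass_def by simp
    then show False using m mu_pos by simp
  qed
  have "2 * integral {0..M} (calib p M) - (1/p) * (M powr (p-2) * mass u)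
      + (1/2) * (LINT x|lborel. (cmod (dH1 u x) - calib p M (cmod (u x)))\<^sup>2) \<le> E0 p u"
    by (rule E0_ge_calibration(2)[OF p_gt_2 H Mb]) (rule Msup)
  then have "E0 p \<Phi> + (1/2) * (LINT x|lborel. (cmod (dH1 u x) - calib p M (cmod (u x)))\<^sup>2) \<le> E0 p u"
    using E0_phi_le_calib_bound[OF M0] unfolding m by linarith
  moreover have "integrable lborel (\<lambda>x. (cmod (dH1 u x) - calib p M (cmod (u x)))\<^sup>2)"
    by (rule E0_ge_calibration(1)[OF p_gt_2 H Mb]) (rule Msup)
  ultimately show ?thesis using M0 Mb by blast
qed

theorem E0_phi_le:
  assumes "H1 u" "mass u = \<mu>"
  shows "E0 p \<Phi> \<le> E0 p u"
proof -
  obtain M where "E0 p \<Phi> + (1/2) * (LINT x|lborel. (cmod (dH1 u x) - calib p M (cmod (u x)))\<^sup>2) \<le> E0 p u"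
    using E0_lower_bound[OF assms] by blast
  moreover have "0 \<le> (LINT x|lborel. (cmod (dH1 u x) - calib p M (cmod (u x)))\<^sup>2)" by simp
  ultimately show ?thesis by linarith
qed

lemma E0_le_phi_nonvanishing:
  assumes H: "H1 u" and m: "mass u = \<mu>" and E: "E0 p u \<le> E0 p \<Phi>"
  shows "u z \<noteq> 0"
proof
  assume z: "u z = 0"
  from E0_lower_bound[OF H m] obtain M where Mb: "\<And>x. cmod (u x) \<le> M"
    and iD: "integrable lborel (\<lambda>x. (cmod (dH1 u x) - calib p M (cmod (u x)))\<^sup>2)"
    and lb: "E0 p \<Phi> + (1/2) * (LINT x|lborel. (cmod (dH1 u x) - calib p M (cmod (u x)))\<^sup>2) \<le> E0 p u"
    by blast
  have "0 \<le> (LINT x|lborel. (cmod (dH1 u x) - calib p M (cmod (u x)))\<^sup>2)" by simp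
  then have "(LINT x|lborel. (cmod (dH1 u x) - calib p M (cmod (u x)))\<^sup>2) = 0"
    using lb E by linarith
  then have "AE x in lborel. (cmod (dH1 u x) - calib p M (cmod (u x)))\<^sup>2 = 0"
    using integral_nonneg_eq_0_iff_AE[OF iD] by simp
  then have "AE x in lborel. cmod (dH1 u x) = calib p M (cmod (u x))"
    by (rule AE_mp) (auto intro!: AE_I2)
  then have lin: "AE x in lborel. cmod (dH1 u x) \<le> sqrt ((2/p) * M powr (p-2)) * cmod (u x)"
    by (rule AE_mp) (use calib_le_linear[OF p_gt_2 norm_ge_zero Mb] in \<open>auto intro!: AE_I2\<close>)
  have "0 \<le> sqrt ((2/p) * M powr (p-2))" using p_gt_2 by simp
  then have "u x = 0" for x
    by (rule weak_deriv_L2_vanishing_everywhere[OF weak_deriv_L2_dH1[OF H] Mb lin _ z])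
  then have "mass u = 0" unfolding mass_def by simp
  then show False using m mu_pos by simp
qed

end

section \<open>Perturbed energies\<close>

context soliton
begin

lemma phi_shift:
  "H1 (\<lambda>x. \<Phi> (x - y))" "mass (\<lambda>x. \<Phi> (x - y)) = \<mu>" "E0 p (\<lambda>x. \<Phi> (x - y)) = E0 p \<Phi>"
proof -
  have shift: "(LINT x|lborel. f (x - y)) = (LINT x|lborel. f x)" for f :: "real \<Rightarrow> real"
    using lborel_integral_real_affine[of 1 "\<lambda>x. f (x - y)" y] by simp
  have deriv: "((\<lambda>x. phi p \<mu> (x - y)) has_real_derivative dphi (x - y)) (at x)" for x
  proof -
    have "((\<lambda>x. x - y) has_real_derivative 1) (at x)"
      by (rule derivative_eq_intros refl | simp)+
    from DERIV_chain2[OF phi_has_derivative this] show ?thesis by simp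
  qed
  have cont: "continuous_on UNIV (\<lambda>x. dphi (x - y))"
    by (rule continuous_on_compose2[OF continuous_dphi]) (auto intro!: continuous_intros)
  have "integrable lborel (\<lambda>x. f (x - y))" if "integrable lborel f" for f :: "real \<Rightarrow> real"
    using lborel_integrable_real_affine[OF that, of 1 "-y"] by simp
  note C1 = H1_of_real_C1[OF deriv cont this[OF integrable_phi_sq] this[OF integrable_dphi_sq]]
  show "H1 (\<lambda>x. \<Phi> (x - y))" by (rule C1(1))
  show "mass (\<lambda>x. \<Phi> (x - y)) = \<mu>"
    using mass_phi shift[of "\<lambda>x. (phi p \<mu> x)\<^sup>2"] by (simp add: mass_def)
  show "E0 p (\<lambda>x. \<Phi> (x - y)) = E0 p \<Phi>"
    unfolding E0_def C1(2) integral_dH1_phi shift[of "\<lambda>x. (dphi x)\<^sup>2"]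
    using shift[of "\<lambda>x. phi p \<mu> x powr p"] phi_pos by (simp add: less_imp_le)
qed

lemma perturbed_infimum_not_attained:
  fixes P :: "(real \<Rightarrow> complex) \<Rightarrow> real"
  assumes P_nonneg: "\<And>u. 0 \<le> P u"
    and P_shift: "(\<lambda>n. P (\<lambda>x. \<Phi> (x - real n))) \<longlonglongrightarrow> 0"
    and P_zero: "\<And>u. H1 u \<Longrightarrow> P u = 0 \<Longrightarrow> \<exists>z. u z = 0"
  shows "Inf {E0 p u + P u | u. H1 u \<and> mass u = \<mu>} = E0 p \<Phi>
    \<and> \<not> (\<exists>u. H1 u \<and> mass u = \<mu> \<and> E0 p u + P u = E0 p \<Phi>)"
proof
  show "Inf {E0 p u + P u | u. H1 u \<and> mass u = \<mu>} = E0 p \<Phi>"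
  proof (rule cInf_eq_lim)
    fix s assume "s \<in> {E0 p u + P u | u. H1 u \<and> mass u = \<mu>}"
    then obtain u where u: "H1 u" "mass u = \<mu>" "s = E0 p u + P u" by blast
    then show "E0 p \<Phi> \<le> s" using E0_phi_le[OF u(1,2)] P_nonneg[of u] by linarith
  next
    show "E0 p (\<lambda>x. \<Phi> (x - real n)) + P (\<lambda>x. \<Phi> (x - real n))
        \<in> {E0 p u + P u | u. H1 u \<and> mass u = \<mu>}" for n
      using phi_shift by blast
    show "(\<lambda>n. E0 p (\<lambda>x. \<Phi> (x - real n)) + P (\<lambda>x. \<Phi> (x - real n))) \<longlonglongrightarrow> E0 p \<Phi>"
      unfolding phi_shift(3) using tendsto_add[OF tendsto_const P_shift] by simp
  qed
  show "\<not> (\<exists>u. H1 u \<and> mass u = \<mu> \<and> E0 p u + P u = E0 p \<Phi>)"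
  proof
    assume "\<exists>u. H1 u \<and> mass u = \<mu> \<and> E0 p u + P u = E0 p \<Phi>"
    then obtain u where H: "H1 u" and m: "mass u = \<mu>" and E: "E0 p u + P u = E0 p \<Phi>" by blast
    have "P u = 0" and "E0 p u \<le> E0 p \<Phi>"
      using E E0_phi_le[OF H m] P_nonneg[of u] by linarith+
    then show False using P_zero[OF H] E0_le_phi_nonvanishing[OF H m] by blast
  qed
qed

lemma EV_infimum_not_attained:
  fixes V :: "real \<Rightarrow> real"
  assumes cV: "continuous_on UNIV V" and V_nonneg: "\<forall>x. 0 \<le> V x" and V_ne: "\<exists>x. V x \<noteq> 0"
    and V_lim: "(V \<longlongrightarrow> 0) at_infinity"
  shows "Inf {EV p V u | u. H1 u \<and> mass u = \<mu>} = E0 p \<Phi>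
    \<and> \<not> (\<exists>u. H1 u \<and> mass u = \<mu> \<and> EV p V u = E0 p \<Phi>)"
  unfolding EV_def
proof (rule perturbed_infimum_not_attained)
  show "0 \<le> 1/2 * (LINT x|lborel. V x * (cmod (u x))\<^sup>2)" for u :: "real \<Rightarrow> complex"
    using V_nonneg by (simp add: integral_nonneg_AE)
  have "(\<lambda>n. 1/2 * (LINT x|lborel. V x * (phi p \<mu> (x - real n))\<^sup>2)) \<longlonglongrightarrow> 0"
    by (rule tendsto_mult_right_zero integral_shift_vanishing_tendsto_0[OF cV V_lim integrable_phi_sq])+
  then show "(\<lambda>n. 1/2 * (LINT x|lborel. V x * (cmod (\<Phi> (x - real n)))\<^sup>2)) \<longlonglongrightarrow> 0"
    by simp
  fix u :: "real \<Rightarrow> complex"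
  assume H: "H1 u" and P0: "1/2 * (LINT x|lborel. V x * (cmod (u x))\<^sup>2) = 0"
  obtain z where z: "V z \<noteq> 0" using V_ne by blast
  have "u z = 0"
  proof (rule ccontr)
    assume "u z \<noteq> 0"
    obtain C where C: "\<And>x. \<bar>V x\<bar> \<le> C"
      using continuous_vanishing_at_infinity_bounded[OF cV V_lim] by blast
    have cont: "continuous_on UNIV (\<lambda>x. V x * (cmod (u x))\<^sup>2)"
      using H cV unfolding H1_def by (intro continuous_intros) auto
    have "0 < (LINT x|lborel. V x * (cmod (u x))\<^sup>2)"
    proof (rule integral_pos_of_continuous_pos_at[where a = z])
      show "integrable lborel (\<lambda>x. V x * (cmod (u x))\<^sup>2)"
        using H C cV by (intro H1_weighted_sq_integrable borel_measurable_continuous_onI)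
      show "isCont (\<lambda>x. V x * (cmod (u x))\<^sup>2) z"
        using cont by (simp add: continuous_on_eq_continuous_at)
      show "0 < V z * (cmod (u z))\<^sup>2"
        using z V_nonneg \<open>u z \<noteq> 0\<close> by (simp add: less_le)
    qed (use V_nonneg in simp)
    then show False using P0 by simp
  qed
  then show "\<exists>z. u z = 0" ..
qed

lemma Eg_infimum_not_attained:
  assumes g: "0 < g"
  shows "Inf {Eg p g u | u. H1 u \<and> mass u = \<mu>} = E0 p \<Phi>
    \<and> \<not> (\<exists>u. H1 u \<and> mass u = \<mu> \<and> Eg p g u = E0 p \<Phi>)"
  unfolding Eg_def
proof (rule perturbed_infimum_not_attained)
  show "0 \<le> g/2 * (cmod (u 0))\<^sup>2" for u :: "real \<Rightarrow> complex"
    using g by simp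
  have "filterlim (\<lambda>n. - real n) at_bot sequentially"
    by (simp add: filterlim_uminus_at_bot filterlim_real_sequentially)
  then have "(\<lambda>n. phi p \<mu> (- real n)) \<longlonglongrightarrow> 0"
    by (rule filterlim_compose[OF phi_tendsto_0(2)])
  then have "(\<lambda>n. g/2 * (phi p \<mu> (- real n))\<^sup>2) \<longlonglongrightarrow> g/2 * 0\<^sup>2"
    by (intro tendsto_intros)
  then show "(\<lambda>n. g/2 * (cmod (\<Phi> (0 - real n)))\<^sup>2) \<longlonglongrightarrow> 0"
    by simp
  show "\<exists>z. u z = 0" if "g/2 * (cmod (u 0))\<^sup>2 = 0" for u :: "real \<Rightarrow> complex"
    using that g by auto
qed

end

theorem lemma6p1:
  fixes p \<mu> :: real and V :: "real \<Rightarrow> real"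
  assumes "2 < p" and "p < 6" and "0 < \<mu>"
    and "continuous_on UNIV V" and "\<forall>x. 0 \<le> V x" and "\<exists>x. V x \<noteq> 0"
    and "(V \<longlongrightarrow> 0) at_infinity"
  shows "Inf {EV p V u | u. H1 u \<and> mass u = \<mu>} = E0 p (\<lambda>x. complex_of_real (phi p \<mu> x))
       \<and> \<not> (\<exists>u. H1 u \<and> mass u = \<mu> \<and> EV p V u = E0 p (\<lambda>x. complex_of_real (phi p \<mu> x)))
       \<and> (\<forall>g>0. Inf {Eg p g u | u. H1 u \<and> mass u = \<mu>} = E0 p (\<lambda>x. complex_of_real (phi p \<mu> x))
              \<and> \<not> (\<exists>u. H1 u \<and> mass u = \<mu> \<and> Eg p g u = E0 p (\<lambda>x. complex_of_real (phi p \<mu> x))))"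
proof -
  interpret soliton p \<mu> using assms(1-3) by unfold_locales
  show ?thesis using EV_infimum_not_attained[OF assms(4-7)] Eg_infimum_not_attained by blast
qed

end
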